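(* Let $g\geq 0$ and $n\geq 1$ be integers, and let $\mathcal{A}_1,\dots,\mathcal{A}_{N-1},\mathcal{A}_N=\mathcal{A}$ be weight data in $\mathcal{D}_{g,n}$, each lying in a chamber, with chambers $Ch_{\mathcal{A}_p}\ni\mathcal{A}_p$, such that the chambers up to symmetry form an ordered sequence $$[Ch_{\mathcal{A}_1}]\leq [Ch_{\mathcal{A}_2}]\leq \dots\leq [Ch_{\mathcal{A}_{N-1}}]\leq [Ch_{\mathcal{A}}].$$ Then this sequence induces a filtration by embeddings $$M^{trop}_{g,\mathcal{A}_1}\hookrightarrow M^{trop}_{g,\mathcal{A}_2}\hookrightarrow \dots\hookrightarrow M^{trop}_{g,\mathcal{A}_{N-1}}\hookrightarrow M^{trop}_{g,\mathcal{A}}.$$ The same holds with $M^{trop}_{g,\mathcal{A}_p}$ replaced throughout by the moduli space $\overline{M}^{trop}_{g,\mathcal{A}_p}$ of extended $(g,\mathcal{A}_p)$-stable tropical curves, or by the moduli space $\Delta_{g,\mathcal{A}_p}$ of $(g,\mathcal{A}_p)$-stable tropical curves of volume $1$.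
   Context: Weight data: for integers $g\ge0,n\ge1$, a weight datum is $\mathcal{A}=(a_1,\dots,a_n)$ with $a_i\in\mathbb{Q}\cap(0,1]$ and $2g-2+\sum_i a_i>0$; $\mathcal{D}_{g,n}\subset\mathbb{R}^n$ is the set of weight data. Write $\mathcal{A}\le\mathcal{B}$ if $a_i\le b_i$ for all $i$. Walls and chambers: for $S\subseteq\{1,\dots,n\}$ with $2\le|S|\le n$ if $g\ge1$ (resp. $2\le |S|\le n-2$ if $g=0$), the wall $w_S$ is the locus $\sum_{i\in S}a_i=1$ in $\mathcal{D}_{g,n}$; $W_f$ is the set of walls. The chambers (fine chamber decomposition) are the connected components of $\mathcal{D}_{g,n}\setminus\bigcup_{w\in W_f}w$; a chamber is determined by specifying, for each such $S$, whether $\sum_{i\in S}a_i<1$ or $>1$. $\mathbf{K}$ denotes the set of chambers. Partial order on $\mathbf{K}$: $Ch_1\le Ch_2$ iff for every such $S$, whenever $\sum_{i\in S}a_i>1$ for $\mathcal{A}\in Ch_1$ then $\sum_{i\in S}b_i>1$ for $\mathcal{B}\in Ch_2$ (i.e. all defining inequalities that differ have $<1$ on $Ch_1$ and $>1$ on $Ch_2$). The symmetric group $S_n$ acts on $\mathcal{D}_{g,n}$ by permuting coordinates, hence on $\mathbf{K}$; the orbit of $Ch$ is the chamber up to symmetry $[Ch]$, and $[Ch_1]\le[Ch_2]$ iff there are $Ch_1'\in[Ch_1]$, $Ch_2'\in[Ch_2]$ with $Ch_1'\le Ch_2'$. Stable graphs: a $(g,\mathcal{A})$-stable graph is a finite connected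 graph $G$ (loops and multiple edges allowed) with a vertex weight $w:V(G)\to\mathbb{Z}_{\ge0}$ and $n$ legs labelled $1,\dots,n$ attached to vertices via $m:\{1,\dots,n\}\to V(G)$, such that $b_1(G)+\sum_v w(v)=g$ and for each vertex $v$, $2w(v)-2+|v|_E+|v|_{\mathcal{A}}>0$, where $|v|_E$ is the number of edge half-edges at $v$ (loops counted twice) and $|v|_{\mathcal{A}}=\sum_{m(i)=v}a_i$. Tropical moduli spaces: a $(g,\mathcal{A})$-stable tropical curve is such a graph with edge lengths $\ell:E(G)\to\mathbb{R}_{>0}$; $M^{trop}_{g,\mathcal{A}}$ is the set of isomorphism classes, topologized as the colimit of the cones $\mathbb{R}_{\ge0}^{E(G)}$ over all $(g,\mathcal{A})$-stable graphs glued along weighted edge contractions (an edge of length $0$ is contracted) and isomorphisms. $\overline{M}^{trop}_{g,\mathcal{A}}$ is defined analogously allowing lengths in $\mathbb{R}_{>0}\cup\{\infty\}$, and $\Delta_{g,\mathcal{A}}\subset M^{trop}_{g,\mathcal{A}}$ is the subspace of curves with total edge length $1$. *)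

theory Defs
  imports "HOL-Analysis.Analysis" "HOL-Combinatorics.Permutations"
begin

text \<open>A weight datum is a function a :: nat => real; only the values a 1, ..., a n matter.\<close>

definition weight_datum :: "nat \<Rightarrow> nat \<Rightarrow> (nat \<Rightarrow> real) \<Rightarrow> bool" where
  "weight_datum g n a \<longleftrightarrow>
     (\<forall>i\<in>{1..n}. a i \<in> \<rat> \<and> 0 < a i \<and> a i \<le> 1) \<and>
     2 * real g - 2 + (\<Sum>i\<in>{1..n}. a i) > 0"

definition wall_index :: "nat \<Rightarrow> nat \<Rightarrow> nat set \<Rightarrow> bool" where
  "wall_index g n S \<longleftrightarrow> S \<subseteq> {1..n} \<and> 2 \<le> card S \<and>
     (if g \<ge> 1 then card S \<le> n else card S + 2 \<le> n)"

text \<open>A weight datum lies in a chamber iff it lies on no wall.\<close>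
definition in_chamber :: "nat \<Rightarrow> nat \<Rightarrow> (nat \<Rightarrow> real) \<Rightarrow> bool" where
  "in_chamber g n a \<longleftrightarrow> (\<forall>S. wall_index g n S \<longrightarrow> (\<Sum>i\<in>S. a i) \<noteq> 1)"

text \<open>Partial order on chambers, expressed through representatives a in Ch_1, b in Ch_2.\<close>
definition chamber_le :: "nat \<Rightarrow> nat \<Rightarrow> (nat \<Rightarrow> real) \<Rightarrow> (nat \<Rightarrow> real) \<Rightarrow> bool" where
  "chamber_le g n a b \<longleftrightarrow>
     (\<forall>S. wall_index g n S \<longrightarrow> (\<Sum>i\<in>S. a i) > 1 \<longrightarrow> (\<Sum>i\<in>S. b i) > 1)"

text \<open>[Ch_a] <= [Ch_b]: some permuted chambers are comparable. The permuted datum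
  a o sigma lies in the chamber obtained from Ch_a by the action of sigma.\<close>
definition sym_chamber_le :: "nat \<Rightarrow> nat \<Rightarrow> (nat \<Rightarrow> real) \<Rightarrow> (nat \<Rightarrow> real) \<Rightarrow> bool" where
  "sym_chamber_le g n a b \<longleftrightarrow>
     (\<exists>\<sigma> \<tau>. \<sigma> permutes {1..n} \<and> \<tau> permutes {1..n} \<and> chamber_le g n (a \<circ> \<sigma>) (b \<circ> \<tau>))"

text \<open>Vertices and edges are finite sets of natural numbers. endp e is the (ordered,
  but only up to swap relevant) pair of endpoints of edge e (a loop has equal endpoints),
  wt is the vertex weight, legv i is the vertex carrying leg i (i = 1..n).\<close>
record tgraph =
  verts :: "nat set"
  edges :: "nat set"
  endp :: "nat \<Rightarrow> nat \<times> nat"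
  wt :: "nat \<Rightarrow> nat"
  legv :: "nat \<Rightarrow> nat"

definition adj :: "tgraph \<Rightarrow> nat set \<Rightarrow> (nat \<times> nat) set" where
  "adj G S = {(u, v). \<exists>e\<in>S. endp G e = (u, v) \<or> endp G e = (v, u)}"

definition valence :: "tgraph \<Rightarrow> nat \<Rightarrow> nat" where
  "valence G v = card {e\<in>edges G. fst (endp G e) = v} + card {e\<in>edges G. snd (endp G e) = v}"

definition stable_graph :: "nat \<Rightarrow> nat \<Rightarrow> (nat \<Rightarrow> real) \<Rightarrow> tgraph \<Rightarrow> bool" where
  "stable_graph g n a G \<longleftrightarrow>
     finite (verts G) \<and> finite (edges G) \<and> verts G \<noteq> {} \<and>
     (\<forall>e\<in>edges G. fst (endp G e) \<in> verts G \<and> snd (endp G e) \<in> verts G) \<and>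
     (\<forall>i\<in>{1..n}. legv G i \<in> verts G) \<and>
     (\<forall>u\<in>verts G. \<forall>v\<in>verts G. (u, v) \<in> (adj G (edges G))\<^sup>*) \<and>
     int (card (edges G)) - int (card (verts G)) + 1 + (\<Sum>v\<in>verts G. int (wt G v)) = int g \<and>
     (\<forall>v\<in>verts G. 2 * real (wt G v) - 2 + real (valence G v)
                    + (\<Sum>i\<in>{i\<in>{1..n}. legv G i = v}. a i) > 0)"

text \<open>Tropical curves: a graph with edge lengths (extended reals; only values on edges matter).\<close>
type_synonym tcurve = "tgraph \<times> (nat \<Rightarrow> ereal)"

definition curve_iso :: "nat \<Rightarrow> tcurve \<Rightarrow> tcurve \<Rightarrow> bool" where
  "curve_iso n C D \<longleftrightarrow> (case C of (G, l) \<Rightarrow> case D of (H, m) \<Rightarrow>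
     (\<exists>f h. bij_betw f (verts G) (verts H) \<and> bij_betw h (edges G) (edges H) \<and>
        (\<forall>e\<in>edges G. endp H (h e) = map_prod f f (endp G e) \<or>
                      endp H (h e) = prod.swap (map_prod f f (endp G e))) \<and>
        (\<forall>v\<in>verts G. wt H (f v) = wt G v) \<and>
        (\<forall>i\<in>{1..n}. legv H i = f (legv G i)) \<and>
        (\<forall>e\<in>edges G. m (h e) = l e)))"

definition iso_class :: "nat \<Rightarrow> tcurve \<Rightarrow> tcurve set" where
  "iso_class n C = {D. curve_iso n C D}"

text \<open>(g,A)-stable tropical curves; fin = True: lengths in (0,infinity),
  fin = False: lengths in (0,infinity] (extended curves).\<close>
definition stable_curve :: "bool \<Rightarrow> nat \<Rightarrow> nat \<Rightarrow> (nat \<Rightarrow> real) \<Rightarrow> tcurve \<Rightarrow> bool" where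
  "stable_curve fin g n a C \<longleftrightarrow> stable_graph g n a (fst C) \<and>
     (\<forall>e\<in>edges (fst C). 0 < snd C e \<and> (fin \<longrightarrow> snd C e < \<infinity>))"

definition moduli_points :: "bool \<Rightarrow> nat \<Rightarrow> nat \<Rightarrow> (nat \<Rightarrow> real) \<Rightarrow> tcurve set set" where
  "moduli_points fin g n a = {iso_class n C | C. stable_curve fin g n a C}"

text \<open>Contraction of the edge set S: vertices connected through S are identified
  (represented by the least vertex of the class); the new vertex weight is the sum of
  the weights plus the first Betti number of the contracted connected subgraph.\<close>
definition vclass :: "tgraph \<Rightarrow> nat set \<Rightarrow> nat \<Rightarrow> nat set" where
  "vclass G S v = {u\<in>verts G. (v, u) \<in> (adj G S)\<^sup>*}"

definition vrep :: "tgraph \<Rightarrow> nat set \<Rightarrow> nat \<Rightarrow> nat" where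
  "vrep G S v = Min (vclass G S v)"

definition contract :: "tgraph \<Rightarrow> nat set \<Rightarrow> tgraph" where
  "contract G S =
     \<lparr> verts = vrep G S ` verts G,
       edges = edges G - S,
       endp = (\<lambda>e. map_prod (vrep G S) (vrep G S) (endp G e)),
       wt = (\<lambda>r. (\<Sum>u\<in>vclass G S r. wt G u)
                 + (card {e\<in>S. fst (endp G e) \<in> vclass G S r} + 1 - card (vclass G S r))),
       legv = (\<lambda>i. vrep G S (legv G i)) \<rparr>"

text \<open>The cone R_{\<ge>0}^{E(G)} (resp. (R_{\<ge>0} \<union> {\<infinity>})^{E(G)}), as a subspace of ereal^nat
  (coordinates outside E(G) fixed to 0).\<close>
definition cone_set :: "bool \<Rightarrow> nat set \<Rightarrow> (nat \<Rightarrow> ereal) set" where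
  "cone_set fin E = {l. (\<forall>e\<in>E. 0 \<le> l e \<and> (fin \<longrightarrow> l e < \<infinity>)) \<and> (\<forall>e. e \<notin> E \<longrightarrow> l e = 0)}"

definition cone_top :: "bool \<Rightarrow> nat set \<Rightarrow> (nat \<Rightarrow> ereal) topology" where
  "cone_top fin E = subtopology (product_topology (\<lambda>_. euclidean) UNIV) (cone_set fin E)"

definition cone_map :: "nat \<Rightarrow> tgraph \<Rightarrow> (nat \<Rightarrow> ereal) \<Rightarrow> tcurve set" where
  "cone_map n G l = iso_class n (contract G {e\<in>edges G. l e = 0}, l)"

definition final_open :: "'b set \<Rightarrow> ('i \<Rightarrow> 'a topology) \<Rightarrow> ('i \<Rightarrow> 'a \<Rightarrow> 'b) \<Rightarrow> 'i set \<Rightarrow> 'b set \<Rightarrow> bool" where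
  "final_open X T f I U \<longleftrightarrow> U \<subseteq> X \<and> (\<forall>i\<in>I. openin (T i) {x \<in> topspace (T i). f i x \<in> U})"

lemma istopology_final_open: "istopology (final_open X T f I)"
  unfolding istopology_def final_open_def
proof (intro conjI allI impI)
  fix S U assume S: "S \<subseteq> X \<and> (\<forall>i\<in>I. openin (T i) {x \<in> topspace (T i). f i x \<in> S})"
    and U: "U \<subseteq> X \<and> (\<forall>i\<in>I. openin (T i) {x \<in> topspace (T i). f i x \<in> U})"
  show "S \<inter> U \<subseteq> X" using S by blast
  show "\<forall>i\<in>I. openin (T i) {x \<in> topspace (T i). f i x \<in> S \<inter> U}"
  proof
    fix i assume "i \<in> I"
    then have "openin (T i) ({x \<in> topspace (T i). f i x \<in> S} \<inter> {x \<in> topspace (T i). f i x \<in> U})"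
      using S U by blast
    moreover have "{x \<in> topspace (T i). f i x \<in> S} \<inter> {x \<in> topspace (T i). f i x \<in> U}
                   = {x \<in> topspace (T i). f i x \<in> S \<inter> U}" by blast
    ultimately show "openin (T i) {x \<in> topspace (T i). f i x \<in> S \<inter> U}" by simp
  qed
next
  fix K assume K: "\<forall>U\<in>K. U \<subseteq> X \<and> (\<forall>i\<in>I. openin (T i) {x \<in> topspace (T i). f i x \<in> U})"
  show "\<Union> K \<subseteq> X" using K by blast
  show "\<forall>i\<in>I. openin (T i) {x \<in> topspace (T i). f i x \<in> \<Union> K}"
  proof
    fix i assume "i \<in> I"
    then have "openin (T i) (\<Union>U\<in>K. {x \<in> topspace (T i). f i x \<in> U})"
      using K by (intro openin_Union) auto
    moreover have "(\<Union>U\<in>K. {x \<in> topspace (T i). f i x \<in> U}) = {x \<in> topspace (T i). f i x \<in> \<Union> K}"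
      by blast
    ultimately show "openin (T i) {x \<in> topspace (T i). f i x \<in> \<Union> K}" by simp
  qed
qed

definition final_topology :: "'b set \<Rightarrow> ('i \<Rightarrow> 'a topology) \<Rightarrow> ('i \<Rightarrow> 'a \<Rightarrow> 'b) \<Rightarrow> 'i set \<Rightarrow> 'b topology" where
  "final_topology X T f I = topology (final_open X T f I)"

definition moduli_top :: "bool \<Rightarrow> nat \<Rightarrow> nat \<Rightarrow> (nat \<Rightarrow> real) \<Rightarrow> tcurve set topology" where
  "moduli_top fin g n a =
     final_topology (moduli_points fin g n a) (\<lambda>G. cone_top fin (edges G)) (cone_map n)
       {G. stable_graph g n a G}"

definition Mtrop :: "nat \<Rightarrow> nat \<Rightarrow> (nat \<Rightarrow> real) \<Rightarrow> tcurve set topology" where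
  "Mtrop g n a = moduli_top True g n a"

definition Mtrop_bar :: "nat \<Rightarrow> nat \<Rightarrow> (nat \<Rightarrow> real) \<Rightarrow> tcurve set topology" where
  "Mtrop_bar g n a = moduli_top False g n a"

definition total_length :: "tcurve \<Rightarrow> ereal" where
  "total_length C = (\<Sum>e\<in>edges (fst C). snd C e)"

definition Delta_trop :: "nat \<Rightarrow> nat \<Rightarrow> (nat \<Rightarrow> real) \<Rightarrow> tcurve set topology" where
  "Delta_trop g n a = subtopology (Mtrop g n a)
     {c \<in> moduli_points True g n a. \<exists>C\<in>c. total_length C = 1}"

definition relabel :: "(nat \<Rightarrow> nat) \<Rightarrow> tcurve \<Rightarrow> tcurve" where
  "relabel \<rho> C = (fst C\<lparr>legv := legv (fst C) \<circ> \<rho>\<rparr>, snd C)"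

definition relabel_map :: "nat \<Rightarrow> (nat \<Rightarrow> nat) \<Rightarrow> tcurve set \<Rightarrow> tcurve set" where
  "relabel_map n \<rho> c = iso_class n (relabel \<rho> (SOME C. C \<in> c))"

end

theory Submission
  imports Defs
begin

text \<open>If [Ch a] \<le> [Ch b], there are permutations \<sigma>, \<tau> with Ch (a \<circ> \<sigma>) \<le> Ch (b \<circ> \<tau>), and
  relabelling legs by \<sigma> \<circ> inv \<tau> turns every (g,a)-stable graph into a (g,b)-stable one: a vertex
  stable only thanks to its legs carries leg weight beyond a wall, and the chamber order keeps it
  beyond that wall for b. So relabelling maps cones of the a-space to cones of the b-space and gives
  an injective continuous map of the colimits. It is also closed: pulling a cone of the b-space back
  gives a cone whose graph need not be (g,a)-stable, but only its finitely many closed faces with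
  (g,a)-stable contraction meet the a-space. An injective continuous closed map is an embedding,
  and relabelling preserves edge lengths, hence the volume-one loci.\<close>

section \<open>Vertex classes of a contraction\<close>

definition wf_graph :: "tgraph \<Rightarrow> bool" where
  "wf_graph G \<longleftrightarrow> finite (verts G) \<and> finite (edges G) \<and>
     (\<forall>e\<in>edges G. fst (endp G e) \<in> verts G \<and> snd (endp G e) \<in> verts G)"

definition wf_legged :: "nat \<Rightarrow> tgraph \<Rightarrow> bool" where
  "wf_legged n G \<longleftrightarrow> wf_graph G \<and> (\<forall>i\<in>{1..n}. legv G i \<in> verts G)"

lemma stable_graph_wf_legged: "stable_graph g n a G \<Longrightarrow> wf_legged n G"
  unfolding stable_graph_def wf_legged_def wf_graph_def by auto

lemma endp_in_verts: "wf_graph G \<Longrightarrow> e \<in> edges G \<Longrightarrow> fst (endp G e) \<in> verts G \<and> snd (endp G e) \<in> verts G"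
  unfolding wf_graph_def by blast

lemma sym_adj: "sym (adj G S)"
  unfolding adj_def sym_def by auto

lemma adj_rtrancl_sym: "(u, v) \<in> (adj G S)\<^sup>* \<Longrightarrow> (v, u) \<in> (adj G S)\<^sup>*"
  using sym_rtrancl[OF sym_adj] by (auto dest: symD)

lemma adj_rtrancl_mono: "S \<subseteq> T \<Longrightarrow> (u, v) \<in> (adj G S)\<^sup>* \<Longrightarrow> (u, v) \<in> (adj G T)\<^sup>*"
  using rtrancl_mono[of "adj G S" "adj G T"] unfolding adj_def by blast

lemma adj_in_verts:
  "wf_graph G \<Longrightarrow> S \<subseteq> edges G \<Longrightarrow> (u, v) \<in> adj G S \<Longrightarrow> u \<in> verts G \<and> v \<in> verts G"
  unfolding adj_def wf_graph_def by fastforce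

lemma vclass_iff: "u \<in> vclass G S v \<longleftrightarrow> u \<in> verts G \<and> (v, u) \<in> (adj G S)\<^sup>*"
  unfolding vclass_def by auto

lemma vclass_refl: "v \<in> verts G \<Longrightarrow> v \<in> vclass G S v"
  unfolding vclass_def by auto

lemma vclass_subset: "vclass G S v \<subseteq> verts G"
  unfolding vclass_def by auto

lemma finite_vclass: "wf_graph G \<Longrightarrow> finite (vclass G S v)"
  using vclass_subset wf_graph_def finite_subset by metis

lemma vclass_eq: "(u, v) \<in> (adj G S)\<^sup>* \<Longrightarrow> vclass G S u = vclass G S v"
  unfolding vclass_def by (blast intro: rtrancl_trans adj_rtrancl_sym)

lemma vrep_in_vclass: "wf_graph G \<Longrightarrow> v \<in> verts G \<Longrightarrow> vrep G S v \<in> vclass G S v"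
  unfolding vrep_def by (rule Min_in) (auto simp: finite_vclass dest: vclass_refl)

lemma vrep_in_verts: "wf_graph G \<Longrightarrow> v \<in> verts G \<Longrightarrow> vrep G S v \<in> verts G"
  using vrep_in_vclass vclass_subset by blast

lemma rtrancl_vrep: "wf_graph G \<Longrightarrow> v \<in> verts G \<Longrightarrow> (v, vrep G S v) \<in> (adj G S)\<^sup>*"
  using vrep_in_vclass vclass_iff by blast

lemma vrep_eq_iff:
  assumes "wf_graph G" "u \<in> verts G" "v \<in> verts G"
  shows "vrep G S u = vrep G S v \<longleftrightarrow> (u, v) \<in> (adj G S)\<^sup>*"
proof
  assume "vrep G S u = vrep G S v"
  then show "(u, v) \<in> (adj G S)\<^sup>*"
    using rtrancl_vrep[OF assms(1,2)] rtrancl_vrep[OF assms(1,3)]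
    by (metis adj_rtrancl_sym rtrancl_trans)
qed (simp add: vrep_def vclass_eq)

lemma vclass_vrep: "wf_graph G \<Longrightarrow> v \<in> verts G \<Longrightarrow> vclass G S (vrep G S v) = vclass G S v"
  using vclass_eq[OF rtrancl_vrep] by simp

lemma vrep_eq_iff_vclass:
  "wf_graph G \<Longrightarrow> u \<in> verts G \<Longrightarrow> v \<in> verts G \<Longrightarrow> vrep G S u = vrep G S v \<longleftrightarrow> u \<in> vclass G S v"
  using vrep_eq_iff vclass_iff adj_rtrancl_sym by metis

lemma mem_vclass_vrep_iff:
  "wf_graph G \<Longrightarrow> x \<in> verts G \<Longrightarrow> y \<in> verts G \<Longrightarrow> y \<in> vclass G S (vrep G S x) \<longleftrightarrow> vrep G S y = vrep G S x"
  using vrep_eq_iff_vclass vclass_vrep by metis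

definition adj_dist :: "tgraph \<Rightarrow> nat set \<Rightarrow> nat \<Rightarrow> nat \<Rightarrow> nat" where
  "adj_dist G S v u = (LEAST k. (v, u) \<in> adj G S ^^ k)"

lemma parent_edge:
  assumes w: "wf_graph G" and SE: "S \<subseteq> edges G" and u: "u \<in> vclass G S v" "u \<noteq> v"
  shows "\<exists>e\<in>S. \<exists>p\<in>vclass G S v. adj_dist G S v p < adj_dist G S v u \<and>
           (endp G e = (p, u) \<or> endp G e = (u, p))"
proof -
  obtain k where "(v, u) \<in> adj G S ^^ k"
    using u rtrancl_power unfolding vclass_def by blast
  then have du: "(v, u) \<in> adj G S ^^ adj_dist G S v u"
    unfolding adj_dist_def by (rule LeastI)
  then obtain m where m: "adj_dist G S v u = Suc m"
    using u by (cases "adj_dist G S v u") auto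
  with du obtain p where vp: "(v, p) \<in> adj G S ^^ m" and pu: "(p, u) \<in> adj G S"
    by (metis relpow_Suc_E)
  have "adj_dist G S v p \<le> m"
    unfolding adj_dist_def using vp by (rule Least_le)
  moreover have "p \<in> vclass G S v"
    using vp adj_in_verts[OF w SE pu] relpow_imp_rtrancl unfolding vclass_def by blast
  moreover obtain e where "e \<in> S" "endp G e = (p, u) \<or> endp G e = (u, p)"
    using pu unfolding adj_def by blast
  ultimately show ?thesis
    using m le_imp_less_Suc by metis
qed

text \<open>Parent edges of distinct vertices differ, as a parent is strictly closer to v than its child.\<close>
lemma card_vclass_le:
  assumes w: "wf_graph G" and SE: "S \<subseteq> edges G"
  shows "card (vclass G S v) \<le> card {e\<in>S. fst (endp G e) \<in> vclass G S v} + 1"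
proof -
  define K where "K = vclass G S v"
  have parents: "\<forall>u\<in>K - {v}. \<exists>e. e \<in> S \<and> (\<exists>p\<in>K. adj_dist G S v p < adj_dist G S v u \<and>
      (endp G e = (p, u) \<or> endp G e = (u, p)))"
    using parent_edge[OF w SE] unfolding K_def by blast
  obtain pe where pe: "\<forall>u\<in>K - {v}. pe u \<in> S \<and> (\<exists>p\<in>K. adj_dist G S v p < adj_dist G S v u \<and>
      (endp G (pe u) = (p, u) \<or> endp G (pe u) = (u, p)))"
    using bchoice[OF parents] by blast
  have "inj_on pe (K - {v})"
  proof (rule inj_onI, rule ccontr)
    fix u u' assume u: "u \<in> K - {v}" and u': "u' \<in> K - {v}" and "pe u = pe u'" and "u \<noteq> u'"
    then have "adj_dist G S v u' < adj_dist G S v u \<and> adj_dist G S v u < adj_dist G S v u'"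
      using bspec[OF pe u] bspec[OF pe u'] by auto
    then show False by linarith
  qed
  moreover have "pe ` (K - {v}) \<subseteq> {e\<in>S. fst (endp G e) \<in> K}"
  proof (rule image_subsetI)
    fix u assume u: "u \<in> K - {v}"
    then show "pe u \<in> {e\<in>S. fst (endp G e) \<in> K}"
      using bspec[OF pe u] by auto
  qed
  moreover have "finite S"
    using SE w finite_subset unfolding wf_graph_def by blast
  ultimately have "card (K - {v}) \<le> card {e\<in>S. fst (endp G e) \<in> K}"
    by (intro card_inj_on_le) auto
  moreover have "card K \<le> card (K - {v}) + 1"
    using finite_vclass[OF w] unfolding K_def by (cases "v \<in> K") (auto simp: K_def card_Diff_singleton)
  ultimately show ?thesis
    unfolding K_def by linarith
qed

section \<open>Isomorphisms of tropical curves\<close>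

definition graph_iso :: "nat \<Rightarrow> (nat \<Rightarrow> nat) \<Rightarrow> (nat \<Rightarrow> nat) \<Rightarrow> tgraph \<Rightarrow> tgraph \<Rightarrow> bool" where
  "graph_iso n f h G H \<longleftrightarrow> bij_betw f (verts G) (verts H) \<and> bij_betw h (edges G) (edges H) \<and>
     (\<forall>e\<in>edges G. endp H (h e) = map_prod f f (endp G e) \<or>
                   endp H (h e) = prod.swap (map_prod f f (endp G e))) \<and>
     (\<forall>v\<in>verts G. wt H (f v) = wt G v) \<and> (\<forall>i\<in>{1..n}. legv H i = f (legv G i))"

lemma curve_iso_iff:
  "curve_iso n (G, l) (H, m) \<longleftrightarrow> (\<exists>f h. graph_iso n f h G H \<and> (\<forall>e\<in>edges G. m (h e) = l e))"
  unfolding curve_iso_def graph_iso_def by simp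

lemma graph_iso_id: "graph_iso n id id G G"
  unfolding graph_iso_def by (simp add: map_prod.id)

lemma graph_iso_comp:
  assumes iso: "graph_iso n f h G H" "graph_iso n f' h' H K"
  shows "graph_iso n (f' \<circ> f) (h' \<circ> h) G K"
proof -
  have hE: "h e \<in> edges H" if "e \<in> edges G" for e
    using iso(1) that unfolding graph_iso_def by (auto dest: bij_betwE)
  have fV: "f v \<in> verts H" if "v \<in> verts G" for v
    using iso(1) that unfolding graph_iso_def by (auto dest: bij_betwE)
  have "endp K (h' (h e)) = map_prod (f' \<circ> f) (f' \<circ> f) (endp G e) \<or>
      endp K (h' (h e)) = prod.swap (map_prod (f' \<circ> f) (f' \<circ> f) (endp G e))" if e: "e \<in> edges G" for e
  proof -
    obtain x y where xy: "endp G e = (x, y)" by fastforce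
    then have "endp H (h e) = (f x, f y) \<or> endp H (h e) = (f y, f x)"
      using iso(1) e unfolding graph_iso_def by auto
    moreover have "endp K (h' (h e)) = map_prod f' f' (endp H (h e)) \<or>
        endp K (h' (h e)) = prod.swap (map_prod f' f' (endp H (h e)))"
      using iso(2) hE[OF e] unfolding graph_iso_def by blast
    ultimately show ?thesis
      using xy by auto
  qed
  then show ?thesis
    using iso fV unfolding graph_iso_def by (auto intro: bij_betw_trans)
qed

lemma graph_iso_inv:
  assumes iso: "graph_iso n f h G H" and wf: "wf_legged n G"
  shows "graph_iso n (inv_into (verts G) f) (inv_into (edges G) h) H G"
proof -
  let ?f' = "inv_into (verts G) f" and ?h' = "inv_into (edges G) h"
  have f: "bij_betw f (verts G) (verts H)" and h: "bij_betw h (edges G) (edges H)"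
    using iso unfolding graph_iso_def by auto
  have h'E: "?h' e \<in> edges G" if "e \<in> edges H" for e
    using bij_betwE[OF bij_betw_inv_into[OF h]] that by blast
  have hh': "h (?h' e) = e" if "e \<in> edges H" for e
    using bij_betw_inv_into_right[OF h that] .
  have f'f: "?f' (f v) = v" if "v \<in> verts G" for v
    using f that bij_betw_inv_into_left by metis
  have endp: "endp G (?h' e) = map_prod ?f' ?f' (endp H e) \<or>
      endp G (?h' e) = prod.swap (map_prod ?f' ?f' (endp H e))" if e: "e \<in> edges H" for e
  proof -
    obtain x y where xy: "endp G (?h' e) = (x, y)" by fastforce
    have "x \<in> verts G" "y \<in> verts G"
      using endp_in_verts[OF _ h'E[OF e]] wf xy unfolding wf_legged_def by force+
    moreover have "endp H (h (?h' e)) = map_prod f f (endp G (?h' e)) \<or>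
        endp H (h (?h' e)) = prod.swap (map_prod f f (endp G (?h' e)))"
      using iso h'E[OF e] unfolding graph_iso_def by blast
    then have "endp H e = (f x, f y) \<or> endp H e = (f y, f x)"
      using hh'[OF e] xy by simp
    ultimately show ?thesis
      using xy f'f by auto
  qed
  show ?thesis
    unfolding graph_iso_def
  proof (intro conjI ballI)
    show "bij_betw ?f' (verts H) (verts G)" using bij_betw_inv_into[OF f] .
    show "bij_betw ?h' (edges H) (edges G)" using bij_betw_inv_into[OF h] .
  next
    fix v assume v: "v \<in> verts H"
    have "wt H (f (?f' v)) = wt G (?f' v)"
      using iso bij_betwE[OF bij_betw_inv_into[OF f]] v unfolding graph_iso_def by blast
    then show "wt G (?f' v) = wt H v"
      using bij_betw_inv_into_right[OF f v] by simp
  next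
    fix i assume "i \<in> {1..n}"
    then show "legv G i = ?f' (legv H i)"
      using iso wf f'f unfolding graph_iso_def wf_legged_def by auto
  qed (rule endp)
qed

lemma curve_iso_refl: "curve_iso n C C"
  using graph_iso_id by (cases C) (fastforce simp: curve_iso_iff)

lemma curve_iso_trans:
  assumes "curve_iso n C D" "curve_iso n D E"
  shows "curve_iso n C E"
proof -
  obtain G l H m K k where CDE: "C = (G, l)" "D = (H, m)" "E = (K, k)"
    by (metis prod.exhaust)
  obtain f h f' h' where iso: "graph_iso n f h G H" "graph_iso n f' h' H K"
    and len: "\<forall>e\<in>edges G. m (h e) = l e" "\<forall>e\<in>edges H. k (h' e) = m e"
    using assms unfolding CDE curve_iso_iff by blast
  have "h e \<in> edges H" if "e \<in> edges G" for e
    using iso(1) that unfolding graph_iso_def by (auto dest: bij_betwE)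
  then show ?thesis
    unfolding CDE curve_iso_iff using graph_iso_comp[OF iso] len by fastforce
qed

lemma curve_iso_sym:
  assumes "curve_iso n C D" "wf_legged n (fst C)"
  shows "curve_iso n D C"
proof -
  obtain G l H m where CD: "C = (G, l)" "D = (H, m)"
    by (metis prod.exhaust)
  obtain f h where iso: "graph_iso n f h G H" and len: "\<forall>e\<in>edges G. m (h e) = l e"
    using assms(1) unfolding CD curve_iso_iff by blast
  have h: "bij_betw h (edges G) (edges H)"
    using iso unfolding graph_iso_def by blast
  have "l (inv_into (edges G) h e) = m e" if "e \<in> edges H" for e
    using len bij_betw_inv_into_right[OF h that] bij_betwE[OF bij_betw_inv_into[OF h]] that by metis
  then show ?thesis
    unfolding CD curve_iso_iff using graph_iso_inv[OF iso] assms(2) CD by auto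
qed

lemma iso_class_eq:
  "curve_iso n C D \<Longrightarrow> wf_legged n (fst C) \<Longrightarrow> iso_class n C = iso_class n D"
  unfolding iso_class_def using curve_iso_sym curve_iso_trans by blast

lemma iso_class_self: "C \<in> iso_class n C"
  unfolding iso_class_def using curve_iso_refl by blast

lemma curve_iso_if_iso_class_eq: "iso_class n C = iso_class n D \<Longrightarrow> curve_iso n C D"
  using iso_class_self unfolding iso_class_def by blast

lemma valence_eq_sum:
  "finite (edges G) \<Longrightarrow> valence G v =
     (\<Sum>e\<in>edges G. (if fst (endp G e) = v then 1 else 0) + (if snd (endp G e) = v then 1 else 0))"
  unfolding valence_def by (simp add: sum.distrib flip: sum.inter_filter)

text \<open>An isomorphism may swap the endpoints of an edge, so the two counts in valence are only
  preserved in sum.\<close>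
lemma graph_iso_valence:
  assumes iso: "graph_iso n f h G H" and wf: "wf_graph G" and v: "v \<in> verts G"
  shows "valence H (f v) = valence G v"
proof -
  have f: "inj_on f (verts G)" and h: "bij_betw h (edges G) (edges H)"
    using iso unfolding graph_iso_def bij_betw_def by auto
  have finH: "finite (edges H)"
    using bij_betw_finite[OF h] wf unfolding wf_graph_def by blast
  have "(if fst (endp H (h e)) = f v then 1 else 0) + (if snd (endp H (h e)) = f v then 1 else 0) =
      (if fst (endp G e) = v then 1 else (0::nat)) + (if snd (endp G e) = v then 1 else 0)"
    if e: "e \<in> edges G" for e
  proof -
    obtain x y where xy: "endp G e = (x, y)" by fastforce
    then have "f x = f v \<longleftrightarrow> x = v" "f y = f v \<longleftrightarrow> y = v"
      using endp_in_verts[OF wf e] inj_on_eq_iff[OF f _ v] by auto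
    moreover have "endp H (h e) = (f x, f y) \<or> endp H (h e) = (f y, f x)"
      using iso e xy unfolding graph_iso_def by auto
    ultimately show ?thesis
      using xy by auto
  qed
  then show ?thesis
    using wf unfolding valence_eq_sum[OF finH] wf_graph_def
    by (simp add: valence_eq_sum[of G] sum.reindex_bij_betw[OF h, symmetric])
qed

lemma graph_iso_rtrancl_adj:
  assumes iso: "graph_iso n f h G H" and "(x, y) \<in> (adj G (edges G))\<^sup>*"
  shows "(f x, f y) \<in> (adj H (edges H))\<^sup>*"
  using assms(2)
proof (induction rule: rtrancl_induct)
  case (step y z)
  then obtain e where e: "e \<in> edges G" "endp G e = (y, z) \<or> endp G e = (z, y)"
    unfolding adj_def by auto
  then have "(f y, f z) \<in> adj H (edges H)"
    using iso bij_betwE unfolding graph_iso_def adj_def by fastforce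
  with step.IH show ?case by simp
qed simp

lemma graph_iso_stable:
  assumes iso: "graph_iso n f h G H" and st: "stable_graph g n a G"
  shows "stable_graph g n a H"
proof -
  have f: "bij_betw f (verts G) (verts H)" and h: "bij_betw h (edges G) (edges H)"
    and legs: "\<forall>i\<in>{1..n}. legv H i = f (legv G i)" and wt: "\<forall>v\<in>verts G. wt H (f v) = wt G v"
    using iso unfolding graph_iso_def by auto
  have wf: "wf_legged n G"
    using stable_graph_wf_legged[OF st] .
  have VH: "verts H = f ` verts G" and EH: "edges H = h ` edges G"
    using f h by (auto simp: bij_betw_def)
  have "{i\<in>{1..n}. legv H i = f v} = {i\<in>{1..n}. legv G i = v}" if "v \<in> verts G" for v
    using legs wf that inj_on_eq_iff[OF bij_betw_imp_inj_on[OF f]] unfolding wf_legged_def by auto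
  then have stable_vertex: "2 * real (wt H (f v)) - 2 + real (valence H (f v))
      + (\<Sum>i\<in>{i\<in>{1..n}. legv H i = f v}. a i) > 0" if "v \<in> verts G" for v
    using st that wt graph_iso_valence[OF iso] wf unfolding stable_graph_def wf_legged_def by simp
  have "(\<Sum>v\<in>verts H. int (wt H v)) = (\<Sum>v\<in>verts G. int (wt G v))"
    using sum.reindex_bij_betw[OF f, of "\<lambda>v. int (wt H v)"] wt by simp
  moreover have "card (edges H) = card (edges G)" "card (verts H) = card (verts G)"
    using bij_betw_same_card[OF h] bij_betw_same_card[OF f] by simp_all
  moreover have "(u, v) \<in> (adj H (edges H))\<^sup>*" if "u \<in> verts H" "v \<in> verts H" for u v
    using that st graph_iso_rtrancl_adj[OF iso] unfolding VH stable_graph_def by blast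
  moreover have "fst (endp H e) \<in> verts H \<and> snd (endp H e) \<in> verts H" if "e \<in> edges H" for e
    using that iso wf unfolding EH VH graph_iso_def wf_legged_def wf_graph_def by fastforce
  ultimately show ?thesis
    using st wf stable_vertex legs unfolding stable_graph_def wf_legged_def VH EH by auto
qed

lemma stable_graph_if_curve_iso:
  "curve_iso n C D \<Longrightarrow> stable_graph g n a (fst C) \<Longrightarrow> stable_graph g n a (fst D)"
  using graph_iso_stable by (cases C, cases D) (auto simp: curve_iso_iff)

section \<open>Relabelling legs\<close>

lemma relabel_pair: "relabel \<rho> (G, l) = (G\<lparr>legv := legv G \<circ> \<rho>\<rparr>, l)"
  unfolding relabel_def by simp

lemma relabel_relabel: "relabel \<rho>' (relabel \<rho> C) = relabel (\<rho> \<circ> \<rho>') C"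
  unfolding relabel_def by (simp add: o_assoc)

lemma relabel_id: "relabel id C = C"
  unfolding relabel_def by simp

lemma adj_legv_update [simp]: "adj (G\<lparr>legv := x\<rparr>) S = adj G S"
  unfolding adj_def by simp

lemma valence_legv_update [simp]: "valence (G\<lparr>legv := x\<rparr>) v = valence G v"
  unfolding valence_def by simp

lemma wf_legged_relabel:
  "wf_legged n G \<Longrightarrow> \<rho> ` {1..n} \<subseteq> {1..n} \<Longrightarrow> wf_legged n (G\<lparr>legv := legv G \<circ> \<rho>\<rparr>)"
  unfolding wf_legged_def wf_graph_def by auto

lemma curve_iso_relabel:
  assumes "\<rho> ` {1..n} \<subseteq> {1..n}" and "curve_iso n C D"
  shows "curve_iso n (relabel \<rho> C) (relabel \<rho> D)"
proof -
  obtain G l H m where CD: "C = (G, l)" "D = (H, m)"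
    by (metis prod.exhaust)
  obtain f h where iso: "graph_iso n f h G H" and len: "\<forall>e\<in>edges G. m (h e) = l e"
    using assms(2) unfolding CD curve_iso_iff by blast
  have "graph_iso n f h (G\<lparr>legv := legv G \<circ> \<rho>\<rparr>) (H\<lparr>legv := legv H \<circ> \<rho>\<rparr>)"
    using iso assms(1) unfolding graph_iso_def by auto
  then show ?thesis
    using len unfolding CD relabel_pair curve_iso_iff by auto
qed

lemma relabel_map_iso_class:
  assumes "wf_legged n (fst C)" and \<rho>: "\<rho> ` {1..n} \<subseteq> {1..n}"
  shows "relabel_map n \<rho> (iso_class n C) = iso_class n (relabel \<rho> C)"
proof -
  define C' where "C' = (SOME C'. C' \<in> iso_class n C)"
  have "curve_iso n C C'"
    using someI[of "\<lambda>C'. C' \<in> iso_class n C", OF iso_class_self] unfolding C'_def iso_class_def by simp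
  then have "iso_class n (relabel \<rho> C) = iso_class n (relabel \<rho> C')"
    using assms wf_legged_relabel
    by (intro iso_class_eq curve_iso_relabel) (auto simp: relabel_def)
  then show ?thesis
    unfolding relabel_map_def C'_def by simp
qed

lemma iso_class_relabel_inj:
  assumes \<rho>: "\<rho> permutes {1..n}" and "wf_legged n (fst C)"
    and "iso_class n (relabel \<rho> C) = iso_class n (relabel \<rho> D)"
  shows "iso_class n C = iso_class n D"
proof -
  have "curve_iso n (relabel (inv \<rho>) (relabel \<rho> C)) (relabel (inv \<rho>) (relabel \<rho> D))"
    using permutes_image[OF permutes_inv[OF \<rho>]]
    by (intro curve_iso_relabel[OF _ curve_iso_if_iso_class_eq[OF assms(3)]]) simp
  then have "curve_iso n C D"
    by (simp add: relabel_relabel permutes_inv_o(1)[OF \<rho>] relabel_id)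
  then show ?thesis
    using iso_class_eq assms(2) by blast
qed

lemma permutes_preimage_eq_image:
  assumes \<sigma>: "\<sigma> permutes A" and \<tau>: "\<tau> permutes A" and "S \<subseteq> A"
  shows "{i\<in>A. (\<sigma> \<circ> inv \<tau>) i \<in> S} = (\<tau> \<circ> inv \<sigma>) ` S"
proof
  show "{i\<in>A. (\<sigma> \<circ> inv \<tau>) i \<in> S} \<subseteq> (\<tau> \<circ> inv \<sigma>) ` S"
    using permutes_inverses[OF \<sigma>] permutes_inverses[OF \<tau>] by (auto intro!: image_eqI)
  show "(\<tau> \<circ> inv \<sigma>) ` S \<subseteq> {i\<in>A. (\<sigma> \<circ> inv \<tau>) i \<in> S}"
    using assms permutes_inverses[OF \<sigma>] permutes_inverses[OF \<tau>]
      permutes_in_image[OF \<tau>] permutes_in_image[OF permutes_inv[OF \<sigma>]] by auto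
qed

text \<open>S corresponds to the wall index inv \<sigma> ` S of the permuted datum a \<circ> \<sigma>.\<close>
lemma chamber_le_sum_gt_one:
  assumes \<sigma>: "\<sigma> permutes {1..n}" and \<tau>: "\<tau> permutes {1..n}"
    and ch: "chamber_le g n (a \<circ> \<sigma>) (b \<circ> \<tau>)" and S: "wall_index g n S"
    and gt: "1 < (\<Sum>i\<in>S. a i)"
  shows "1 < (\<Sum>i\<in>(\<tau> \<circ> inv \<sigma>) ` S. b i)"
proof -
  define T where "T = inv \<sigma> ` S"
  have inj: "inj_on \<sigma> T" "inj_on \<tau> T" "inj_on (inv \<sigma>) S"
    using permutes_inj[OF \<sigma>] permutes_inj[OF \<tau>] permutes_inj[OF permutes_inv[OF \<sigma>]]
    by (auto intro: inj_on_subset)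
  have "\<sigma> ` T = S"
    unfolding T_def image_comp by (simp add: permutes_inv_o(1)[OF \<sigma>])
  then have "(\<Sum>i\<in>T. (a \<circ> \<sigma>) i) = (\<Sum>i\<in>S. a i)"
    using sum.reindex[OF inj(1), of a] by simp
  moreover have "(\<Sum>i\<in>T. (b \<circ> \<tau>) i) = (\<Sum>i\<in>(\<tau> \<circ> inv \<sigma>) ` S. b i)"
    using sum.reindex[OF inj(2), of b] unfolding T_def image_comp by simp
  moreover have "wall_index g n T"
    using S card_image[OF inj(3)] permutes_image[OF permutes_inv[OF \<sigma>]]
    unfolding wall_index_def T_def by auto
  ultimately show ?thesis
    using ch gt unfolding chamber_le_def by auto
qed

lemma valence_zero_imp_isolated:
  assumes st: "stable_graph g n a G" and v: "v \<in> verts G" and "valence G v = 0"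
  shows "verts G = {v}" and "edges G = {}"
proof -
  have no_edge: "\<forall>e\<in>edges G. fst (endp G e) \<noteq> v \<and> snd (endp G e) \<noteq> v"
    using assms st unfolding valence_def stable_graph_def by auto
  show V: "verts G = {v}"
  proof (rule ccontr)
    assume "verts G \<noteq> {v}"
    then obtain u where "u \<in> verts G" "u \<noteq> v"
      using v by blast
    then have "(v, u) \<in> (adj G (edges G))\<^sup>*"
      using st v unfolding stable_graph_def by blast
    then have "(v, u) \<in> (adj G (edges G))\<^sup>+"
      using \<open>u \<noteq> v\<close> by (simp add: rtrancl_eq_or_trancl)
    then obtain y where "(v, y) \<in> adj G (edges G)"
      using converse_tranclE by metis
    then show False
      using no_edge unfolding adj_def by force
  qed
  show "edges G = {}"
    using no_edge st V unfolding stable_graph_def by fastforce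
qed

text \<open>If S is not a wall index, then g = 0 and at most one leg lies outside S', whose b-weight
  is thus below 1 while the total b-weight exceeds 2.\<close>
lemma leg_weight_gt_one_transfer:
  fixes a b :: "nat \<Rightarrow> real"
  assumes S: "S \<subseteq> {1..n}" and S': "S' \<subseteq> {1..n}" and card: "card S' = card S"
    and a: "\<forall>i\<in>S. a i \<le> 1" and b: "\<forall>i\<in>{1..n}. 0 < b i \<and> b i \<le> 1"
    and bsum: "2 * real g - 2 + (\<Sum>i\<in>{1..n}. b i) > 0"
    and wall: "wall_index g n S \<Longrightarrow> 1 < (\<Sum>i\<in>S. a i) \<Longrightarrow> 1 < (\<Sum>i\<in>S'. b i)"
    and gt: "1 < (\<Sum>i\<in>S. a i)"
  shows "1 < (\<Sum>i\<in>S'. b i)"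
proof (cases "1 \<le> g \<or> card S + 2 \<le> n")
  case True
  have "(\<Sum>i\<in>S. a i) \<le> real (card S)"
    using sum_bounded_above[of S a 1] a by auto
  then have "2 \<le> card S"
    using gt by linarith
  then show ?thesis
    using True wall gt S card_mono[OF _ S] unfolding wall_index_def by auto
next
  case False
  have "(\<Sum>i\<in>{1..n}. b i) = (\<Sum>i\<in>S'. b i) + (\<Sum>i\<in>{1..n} - S'. b i)"
    using sum.subset_diff[OF S'] by (simp add: add.commute)
  moreover have "(\<Sum>i\<in>{1..n} - S'. b i) \<le> real (card ({1..n} - S'))"
    using sum_bounded_above[of "{1..n} - S'" b 1] b by auto
  moreover have "card ({1..n} - S') = n - card S'"
    using card_Diff_subset[OF finite_subset[OF S'] S'] by simp
  ultimately show ?thesis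
    using False bsum card by linarith
qed

lemma vertex_stability_transfer:
  fixes w val :: nat and a b :: "nat \<Rightarrow> real"
  assumes S: "S \<subseteq> {1..n}" and S': "S' \<subseteq> {1..n}" and card: "card S' = card S"
    and a: "\<forall>i\<in>S. a i \<le> 1" and b: "\<forall>i\<in>{1..n}. 0 < b i \<and> b i \<le> 1"
    and bsum: "2 * real g - 2 + (\<Sum>i\<in>{1..n}. b i) > 0"
    and wall: "wall_index g n S \<Longrightarrow> 1 < (\<Sum>i\<in>S. a i) \<Longrightarrow> 1 < (\<Sum>i\<in>S'. b i)"
    and isolated: "w = 0 \<Longrightarrow> val = 0 \<Longrightarrow> 2 < (\<Sum>i\<in>S'. b i)"
    and stable: "0 < 2 * real w - 2 + real val + (\<Sum>i\<in>S. a i)"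
  shows "0 < 2 * real w - 2 + real val + (\<Sum>i\<in>S'. b i)"
proof -
  have finite: "finite S" "finite S'"
    using S S' finite_subset by auto
  have b_nonneg: "0 \<le> (\<Sum>i\<in>S'. b i)"
    using b S' by (intro sum_nonneg) (fastforce intro: less_imp_le)
  consider "3 \<le> 2 * w + val" | "2 * w + val = 2" | "w = 0" "val = 1" | "w = 0" "val = 0"
    by linarith
  then show ?thesis
  proof cases
    case 2
    then have "S \<noteq> {}"
      using stable by auto
    then have "S' \<noteq> {}"
      using card finite by auto
    then have "0 < (\<Sum>i\<in>S'. b i)"
      using b S' finite by (intro sum_pos) auto
    then show ?thesis
      using 2 by linarith
  next
    case 3
    then show ?thesis
      using leg_weight_gt_one_transfer[OF S S' card a b bsum wall] stable by simp
  qed (use isolated b_nonneg in auto)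
qed

lemma relabelled_legs_eq_image:
  assumes \<sigma>: "\<sigma> permutes {1..n}" and \<tau>: "\<tau> permutes {1..n}"
  shows "{i\<in>{1..n}. legv G ((\<sigma> \<circ> inv \<tau>) i) = v} = (\<tau> \<circ> inv \<sigma>) ` {j\<in>{1..n}. legv G j = v}"
proof -
  have "{i\<in>{1..n}. legv G ((\<sigma> \<circ> inv \<tau>) i) = v} = {i\<in>{1..n}. (\<sigma> \<circ> inv \<tau>) i \<in> {j\<in>{1..n}. legv G j = v}}"
    using permutes_in_image[OF permutes_compose[OF permutes_inv[OF \<tau>] \<sigma>]] by blast
  also have "\<dots> = (\<tau> \<circ> inv \<sigma>) ` {j\<in>{1..n}. legv G j = v}"
    by (rule permutes_preimage_eq_image[OF \<sigma> \<tau>]) auto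
  finally show ?thesis .
qed

lemma stable_vertex_relabel:
  assumes wa: "weight_datum g n a" and wb: "weight_datum g n b"
    and \<sigma>: "\<sigma> permutes {1..n}" and \<tau>: "\<tau> permutes {1..n}"
    and ch: "chamber_le g n (a \<circ> \<sigma>) (b \<circ> \<tau>)" and st: "stable_graph g n a G" and v: "v \<in> verts G"
  shows "0 < 2 * real (wt G v) - 2 + real (valence G v)
           + (\<Sum>i\<in>{i\<in>{1..n}. legv G ((\<sigma> \<circ> inv \<tau>) i) = v}. b i)"
proof -
  define S where "S = {j\<in>{1..n}. legv G j = v}"
  define S' where "S' = (\<tau> \<circ> inv \<sigma>) ` S"
  have S'_eq: "{i\<in>{1..n}. legv G ((\<sigma> \<circ> inv \<tau>) i) = v} = S'"
    unfolding S_def S'_def using relabelled_legs_eq_image[OF \<sigma> \<tau>] .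
  have S: "S \<subseteq> {1..n}" and S': "S' \<subseteq> {1..n}"
    using S'_eq unfolding S_def by auto
  have card: "card S' = card S"
    using permutes_inj[OF permutes_compose[OF permutes_inv[OF \<sigma>] \<tau>]]
    unfolding S'_def by (metis card_image inj_on_subset subset_UNIV)
  have b: "\<forall>i\<in>{1..n}. 0 < b i \<and> b i \<le> 1" and bsum: "2 * real g - 2 + (\<Sum>i\<in>{1..n}. b i) > 0"
    using wb unfolding weight_datum_def by auto
  have isolated: "2 < (\<Sum>i\<in>S'. b i)" if "wt G v = 0" "valence G v = 0"
  proof -
    have V: "verts G = {v}" and "edges G = {}"
      using valence_zero_imp_isolated[OF st v] that(2) by auto
    then have "g = 0"
      using st that(1) unfolding stable_graph_def by simp
    moreover have "S = {1..n}"
      using st V unfolding stable_graph_def S_def by blast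
    then have "S' = {1..n}"
      using S' card by (simp add: card_subset_eq)
    ultimately show ?thesis
      using bsum by simp
  qed
  show ?thesis
    unfolding S'_eq
  proof (rule vertex_stability_transfer[OF S S' card _ b bsum _ isolated])
    show "\<forall>i\<in>S. a i \<le> 1"
      using wa S unfolding weight_datum_def by blast
    show "1 < sum b S'" if "wall_index g n S" "1 < sum a S"
      using chamber_le_sum_gt_one[OF \<sigma> \<tau> ch that] unfolding S'_def .
    show "0 < 2 * real (wt G v) - 2 + real (valence G v) + sum a S"
      using st v unfolding stable_graph_def S_def by blast
  qed
qed

lemma stable_graph_relabel:
  assumes wa: "weight_datum g n a" and wb: "weight_datum g n b"
    and \<sigma>: "\<sigma> permutes {1..n}" and \<tau>: "\<tau> permutes {1..n}"
    and ch: "chamber_le g n (a \<circ> \<sigma>) (b \<circ> \<tau>)" and st: "stable_graph g n a G"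
  shows "stable_graph g n b (G\<lparr>legv := legv G \<circ> (\<sigma> \<circ> inv \<tau>)\<rparr>)"
proof -
  have "\<forall>i\<in>{1..n}. legv G ((\<sigma> \<circ> inv \<tau>) i) \<in> verts G"
    using st permutes_in_image[OF permutes_compose[OF permutes_inv[OF \<tau>] \<sigma>]]
    unfolding stable_graph_def by blast
  then show ?thesis
    using st stable_vertex_relabel[OF wa wb \<sigma> \<tau> ch st] unfolding stable_graph_def by simp
qed

section \<open>Weighted edge contraction\<close>

lemma contract_simps [simp]:
  "verts (contract G S) = vrep G S ` verts G"
  "edges (contract G S) = edges G - S"
  "endp (contract G S) e = map_prod (vrep G S) (vrep G S) (endp G e)"
  "legv (contract G S) i = vrep G S (legv G i)"
  unfolding contract_def by simp_all

lemma wf_graph_contract: "wf_graph G \<Longrightarrow> wf_graph (contract G S)"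
  unfolding wf_graph_def by auto

lemma wf_legged_contract: "wf_legged n G \<Longrightarrow> wf_legged n (contract G S)"
  unfolding wf_legged_def using wf_graph_contract by auto

lemma rtrancl_adj_contract:
  assumes w: "wf_graph G" and YE: "Y \<subseteq> edges G" and p: "(u, v) \<in> (adj G Y)\<^sup>*"
  shows "(vrep G Z u, vrep G Z v) \<in> (adj (contract G Z) (Y - Z))\<^sup>*"
  using p
proof (induction rule: rtrancl_induct)
  case (step y z)
  obtain e where e: "e \<in> Y" "endp G e = (y, z) \<or> endp G e = (z, y)"
    using step.hyps(2) unfolding adj_def by auto
  have "(vrep G Z y, vrep G Z z) \<in> (adj (contract G Z) (Y - Z))\<^sup>*"
  proof (cases "e \<in> Z")
    case True
    then have "(y, z) \<in> adj G Z"
      using e(2) unfolding adj_def by auto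
    moreover have "y \<in> verts G" "z \<in> verts G"
      using endp_in_verts[OF w, of e] e YE by auto
    ultimately have "vrep G Z y = vrep G Z z"
      using vrep_eq_iff[OF w] by blast
    then show ?thesis by simp
  next
    case False
    then have "(vrep G Z y, vrep G Z z) \<in> adj (contract G Z) (Y - Z)"
      using e unfolding adj_def by force
    then show ?thesis by blast
  qed
  with step.IH show ?case
    by (rule rtrancl_trans)
qed simp

lemma rtrancl_adj_if_vrep_eq:
  assumes "wf_graph G" "Z \<subseteq> Y" "x \<in> verts G" "y \<in> verts G" "vrep G Z x = vrep G Z y"
  shows "(x, y) \<in> (adj G Y)\<^sup>*"
  using vrep_eq_iff[OF assms(1,3,4)] assms(5) adj_rtrancl_mono[OF assms(2)] by simp

lemma rtrancl_adj_of_contract: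
  assumes w: "wf_graph G" and ZY: "Z \<subseteq> Y" and YE: "Y \<subseteq> edges G" and u: "u \<in> verts G"
    and "(vrep G Z u, t) \<in> (adj (contract G Z) (Y - Z))\<^sup>*"
  shows "\<forall>v\<in>verts G. vrep G Z v = t \<longrightarrow> (u, v) \<in> (adj G Y)\<^sup>*"
  using assms(5)
proof (induction rule: rtrancl_induct)
  case base
  show ?case
    using rtrancl_adj_if_vrep_eq[OF w ZY u] by simp
next
  case (step t1 t2)
  obtain e where e: "e \<in> Y - Z"
    "map_prod (vrep G Z) (vrep G Z) (endp G e) = (t1, t2) \<or>
     map_prod (vrep G Z) (vrep G Z) (endp G e) = (t2, t1)"
    using step.hyps(2) unfolding adj_def by auto
  obtain x y where xy: "endp G e = (x, y)" by fastforce
  have "(x, y) \<in> adj G Y" "(y, x) \<in> adj G Y"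
    using e(1) xy unfolding adj_def by auto
  then obtain p q where pq: "(p, q) \<in> adj G Y" "vrep G Z p = t1" "vrep G Z q = t2"
    using e(2) xy by auto
  then have "p \<in> verts G" "q \<in> verts G"
    using adj_in_verts[OF w YE] by auto
  then have "(u, p) \<in> (adj G Y)\<^sup>*"
    using step.IH pq(2) by blast
  then have "(u, q) \<in> (adj G Y)\<^sup>*"
    using pq(1) by (rule rtrancl_into_rtrancl)
  then show ?case
    using rtrancl_adj_if_vrep_eq[OF w ZY \<open>q \<in> verts G\<close>] pq(3) by (metis rtrancl_trans)
qed

lemma rtrancl_adj_contract_iff:
  assumes "wf_graph G" "Z \<subseteq> Y" "Y \<subseteq> edges G" "u \<in> verts G" "v \<in> verts G"
  shows "(vrep G Z u, vrep G Z v) \<in> (adj (contract G Z) (Y - Z))\<^sup>* \<longleftrightarrow> (u, v) \<in> (adj G Y)\<^sup>*"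
proof
  show "(u, v) \<in> (adj G Y)\<^sup>*" if "(vrep G Z u, vrep G Z v) \<in> (adj (contract G Z) (Y - Z))\<^sup>*"
    using rtrancl_adj_of_contract[OF assms(1-4) that] assms(5) by blast
  show "(vrep G Z u, vrep G Z v) \<in> (adj (contract G Z) (Y - Z))\<^sup>*" if "(u, v) \<in> (adj G Y)\<^sup>*"
    using rtrancl_adj_contract[OF assms(1,3) that] .
qed

lemma sum_fibres:
  assumes "finite A" "finite C"
  shows "(\<Sum>u\<in>C. \<Sum>e\<in>{e\<in>A. g e = u}. h e) = (\<Sum>e\<in>{e\<in>A. g e \<in> C}. h e)"
proof -
  have "(\<Sum>u\<in>C. \<Sum>e\<in>{e\<in>A. g e = u}. h e) = (\<Sum>u\<in>C. \<Sum>e\<in>{x\<in>{e\<in>A. g e \<in> C}. g x = u}. h e)"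
    by (intro sum.cong) auto
  also have "\<dots> = (\<Sum>e\<in>{e\<in>A. g e \<in> C}. h e)"
    using assms by (intro sum.group) auto
  finally show ?thesis .
qed

lemma sum_card_fibres:
  "finite A \<Longrightarrow> finite C \<Longrightarrow> (\<Sum>u\<in>C. card {e\<in>A. g e = u}) = card {e\<in>A. g e \<in> C}"
  using sum_fibres[where h = "\<lambda>_. 1::nat"] by simp

lemma sum_over_vclasses:
  assumes w: "wf_graph G" and K: "K \<subseteq> verts G" and closed: "\<forall>u\<in>K. vclass G S u \<subseteq> K"
  shows "(\<Sum>u\<in>K. F u) = (\<Sum>r\<in>vrep G S ` K. \<Sum>u\<in>vclass G S r. F u)"
proof -
  have fibre: "{u\<in>K. vrep G S u = vrep G S x} = vclass G S (vrep G S x)" if "x \<in> K" for x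
  proof -
    have x: "x \<in> verts G"
      using that K by blast
    have "u \<in> K \<and> vrep G S u = vrep G S x \<longleftrightarrow> u \<in> vclass G S x" for u
      using vrep_eq_iff_vclass[OF w _ x, of u S] closed that K vclass_subset by blast
    then show ?thesis
      using vclass_vrep[OF w x] by auto
  qed
  have "finite K"
    using K w finite_subset unfolding wf_graph_def by blast
  then have "(\<Sum>u\<in>K. F u) = (\<Sum>r\<in>vrep G S ` K. \<Sum>u\<in>{u\<in>K. vrep G S u = r}. F u)"
    by (rule sum.image_gen)
  also have "\<dots> = (\<Sum>r\<in>vrep G S ` K. \<Sum>u\<in>vclass G S r. F u)"
    using fibre by (intro sum.cong) auto
  finally show ?thesis .
qed

lemma card_over_vclasses:
  assumes w: "wf_graph G" and K: "K \<subseteq> verts G" and closed: "\<forall>u\<in>K. vclass G S u \<subseteq> K"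
    and A: "finite A" "\<forall>e\<in>A. fst (endp G e) \<in> K"
  shows "card A = (\<Sum>r\<in>vrep G S ` K. card {e\<in>A. fst (endp G e) \<in> vclass G S r})"
proof -
  have finK: "finite K"
    using K w finite_subset unfolding wf_graph_def by blast
  have "card A = (\<Sum>u\<in>K. card {e\<in>A. fst (endp G e) = u})"
    using sum_card_fibres[OF A(1) finK, of "\<lambda>e. fst (endp G e)"] A(2)
    by (simp add: Collect_conj_eq Int_absorb2 subsetI)
  also have "\<dots> = (\<Sum>r\<in>vrep G S ` K. \<Sum>u\<in>vclass G S r. card {e\<in>A. fst (endp G e) = u})"
    by (rule sum_over_vclasses[OF w K closed])
  also have "\<dots> = (\<Sum>r\<in>vrep G S ` K. card {e\<in>A. fst (endp G e) \<in> vclass G S r})"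
    using sum_card_fibres[OF A(1) finite_vclass[OF w], of "\<lambda>e. fst (endp G e)"] by simp
  finally show ?thesis .
qed

text \<open>The weight formula of the contraction is free of truncated subtraction, by card_vclass_le.\<close>
lemma of_nat_wt_contract:
  "wf_graph G \<Longrightarrow> S \<subseteq> edges G \<Longrightarrow> (of_nat (wt (contract G S) r) :: 'a::comm_ring_1) =
     (\<Sum>u\<in>vclass G S r. of_nat (wt G u)) + of_nat (card {e\<in>S. fst (endp G e) \<in> vclass G S r}) + 1
       - of_nat (card (vclass G S r))"
  using card_vclass_le[of G S r] unfolding contract_def by (simp add: of_nat_diff)

lemma sum_wt_contract:
  assumes w: "wf_graph G" and SE: "S \<subseteq> edges G" and K: "K \<subseteq> verts G"
    and closed: "\<forall>u\<in>K. vclass G S u \<subseteq> K"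
  shows "(\<Sum>r\<in>vrep G S ` K. int (wt (contract G S) r)) = (\<Sum>u\<in>K. int (wt G u))
           + int (card {e\<in>S. fst (endp G e) \<in> K}) + int (card (vrep G S ` K)) - int (card K)"
proof -
  define C where "C r = vclass G S r" for r
  have sub: "C r \<subseteq> K" if r: "r \<in> vrep G S ` K" for r
  proof -
    obtain x where "x \<in> K" "r = vrep G S x"
      using r by blast
    then show ?thesis
      using closed K vclass_vrep[OF w, of x S] unfolding C_def by auto
  qed
  have finS: "finite S"
    using SE w finite_subset unfolding wf_graph_def by blast
  have "(\<Sum>u\<in>K. int (wt G u)) = (\<Sum>r\<in>vrep G S ` K. \<Sum>u\<in>C r. int (wt G u))"
    and "card K = (\<Sum>r\<in>vrep G S ` K. card (C r))"
    using sum_over_vclasses[OF w K closed, of "\<lambda>u. int (wt G u)"]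
      sum_over_vclasses[OF w K closed, of "\<lambda>_. 1::nat"] unfolding C_def by simp_all
  moreover have "card {e\<in>S. fst (endp G e) \<in> K} = (\<Sum>r\<in>vrep G S ` K. card {e\<in>S. fst (endp G e) \<in> C r})"
  proof -
    have "card {e\<in>S. fst (endp G e) \<in> K} =
        (\<Sum>r\<in>vrep G S ` K. card {e\<in>{e\<in>S. fst (endp G e) \<in> K}. fst (endp G e) \<in> C r})"
      unfolding C_def using finS by (intro card_over_vclasses[OF w K closed]) auto
    also have "\<dots> = (\<Sum>r\<in>vrep G S ` K. card {e\<in>S. fst (endp G e) \<in> C r})"
      using sub by (intro sum.cong) (auto intro: arg_cong[where f = card])
    finally show ?thesis .
  qed
  ultimately show ?thesis
    using of_nat_wt_contract[OF w SE, where 'a = int] unfolding C_def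
    by (simp add: sum.distrib sum_subtractf)
qed

lemma card_filter_split:
  "finite E \<Longrightarrow> S \<subseteq> E \<Longrightarrow> card {e\<in>E. P e} = card {e\<in>E - S. P e} + card {e\<in>S. P e}"
  by (subst card_Un_disjoint[symmetric]) (auto intro: arg_cong[where f = card] finite_subset)

lemma sum_valence_vclass:
  assumes w: "wf_graph G" and SE: "S \<subseteq> edges G" and r: "r \<in> verts (contract G S)"
  shows "(\<Sum>u\<in>vclass G S r. valence G u)
           = valence (contract G S) r + 2 * card {e\<in>S. fst (endp G e) \<in> vclass G S r}"
proof -
  define C where "C = vclass G S r"
  obtain x where x: "x \<in> verts G" "r = vrep G S x"
    using r by auto
  have finE: "finite (edges G)"
    using w unfolding wf_graph_def by blast
  have fst_C: "vrep G S (fst (endp G e)) = r \<longleftrightarrow> fst (endp G e) \<in> C"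
    and snd_C: "vrep G S (snd (endp G e)) = r \<longleftrightarrow> snd (endp G e) \<in> C" if "e \<in> edges G" for e
    using mem_vclass_vrep_iff[OF w x(1)] endp_in_verts[OF w that] unfolding C_def x(2) by auto
  have "{e\<in>edges G - S. vrep G S (fst (endp G e)) = r} = {e\<in>edges G - S. fst (endp G e) \<in> C}"
    and "{e\<in>edges G - S. vrep G S (snd (endp G e)) = r} = {e\<in>edges G - S. snd (endp G e) \<in> C}"
    using fst_C snd_C by (metis DiffD1)+
  then have "valence (contract G S) r
      = card {e\<in>edges G - S. fst (endp G e) \<in> C} + card {e\<in>edges G - S. snd (endp G e) \<in> C}"
    unfolding valence_def by simp
  moreover have "{e\<in>S. snd (endp G e) \<in> C} = {e\<in>S. fst (endp G e) \<in> C}"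
  proof (rule Collect_cong)
    fix e
    have "vrep G S (fst (endp G e)) = vrep G S (snd (endp G e))" if "e \<in> S"
    proof -
      have "(fst (endp G e), snd (endp G e)) \<in> adj G S"
        using that unfolding adj_def by force
      then show ?thesis
        using vrep_eq_iff[OF w, of "fst (endp G e)" "snd (endp G e)" S] endp_in_verts[OF w, of e] that SE
        by blast
    qed
    then show "(e \<in> S \<and> snd (endp G e) \<in> C) \<longleftrightarrow> (e \<in> S \<and> fst (endp G e) \<in> C)"
      using fst_C[of e] snd_C[of e] SE by (cases "e \<in> S") auto
  qed
  moreover have "(\<Sum>u\<in>C. valence G u)
      = card {e\<in>edges G. fst (endp G e) \<in> C} + card {e\<in>edges G. snd (endp G e) \<in> C}"
    using sum_card_fibres[OF finE finite_vclass[OF w]]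
    unfolding valence_def C_def by (simp add: sum.distrib)
  moreover have "card {e\<in>edges G. fst (endp G e) \<in> C}
      = card {e\<in>edges G - S. fst (endp G e) \<in> C} + card {e\<in>S. fst (endp G e) \<in> C}"
    and "card {e\<in>edges G. snd (endp G e) \<in> C}
      = card {e\<in>edges G - S. snd (endp G e) \<in> C} + card {e\<in>S. snd (endp G e) \<in> C}"
    by (rule card_filter_split[OF finE SE])+
  ultimately show ?thesis
    unfolding C_def by simp
qed

lemma legs_contract:
  assumes wf: "wf_legged n G" and r: "r \<in> verts (contract G S)"
  shows "{i\<in>{1..n}. legv (contract G S) i = r} = {i\<in>{1..n}. legv G i \<in> vclass G S r}"
proof (rule Collect_cong)
  fix i
  obtain x where x: "x \<in> verts G" "r = vrep G S x"
    using r by auto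
  have "i \<in> {1..n} \<Longrightarrow> legv G i \<in> verts G"
    using wf unfolding wf_legged_def by blast
  then show "(i \<in> {1..n} \<and> legv (contract G S) i = r) \<longleftrightarrow> (i \<in> {1..n} \<and> legv G i \<in> vclass G S r)"
    using mem_vclass_vrep_iff[OF _ x(1)] wf x(2) unfolding wf_legged_def by auto
qed

lemma stable_vertex_contract:
  assumes st: "stable_graph g n a G" and SE: "S \<subseteq> edges G" and r: "r \<in> verts (contract G S)"
  shows "0 < 2 * real (wt (contract G S) r) - 2 + real (valence (contract G S) r)
           + (\<Sum>i\<in>{i\<in>{1..n}. legv (contract G S) i = r}. a i)"
proof -
  have wf: "wf_legged n G"
    using stable_graph_wf_legged[OF st] .
  then have w: "wf_graph G"
    unfolding wf_legged_def by blast
  define C where "C = vclass G S r"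
  define z where "z = card {e\<in>S. fst (endp G e) \<in> C}"
  obtain x where x: "x \<in> verts G" "r = vrep G S x"
    using r by auto
  have "r \<in> C"
    unfolding C_def x(2) vclass_vrep[OF w x(1)] using vrep_in_vclass[OF w x(1)] .
  moreover have "C \<subseteq> verts G" "finite C"
    unfolding C_def using vclass_subset finite_vclass[OF w] by auto
  ultimately have "0 < (\<Sum>u\<in>C. 2 * real (wt G u) - 2 + real (valence G u)
                               + (\<Sum>i\<in>{i\<in>{1..n}. legv G i = u}. a i))"
    using st unfolding stable_graph_def by (intro sum_pos) auto
  also have "\<dots> = 2 * (\<Sum>u\<in>C. real (wt G u)) - 2 * real (card C) + real (\<Sum>u\<in>C. valence G u)
                   + (\<Sum>u\<in>C. \<Sum>i\<in>{i\<in>{1..n}. legv G i = u}. a i)"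
    by (simp add: sum.distrib sum_subtractf sum_distrib_left)
  also have "(\<Sum>u\<in>C. \<Sum>i\<in>{i\<in>{1..n}. legv G i = u}. a i) = (\<Sum>i\<in>{i\<in>{1..n}. legv G i \<in> C}. a i)"
    using sum_fibres[OF finite_atLeastAtMost \<open>finite C\<close>, where g = "legv G" and h = a] by simp
  also have "\<dots> = (\<Sum>i\<in>{i\<in>{1..n}. legv (contract G S) i = r}. a i)"
    unfolding C_def legs_contract[OF wf r] ..
  also have "(\<Sum>u\<in>C. valence G u) = valence (contract G S) r + 2 * z"
    unfolding C_def z_def using sum_valence_vclass[OF w SE r] .
  also have "(\<Sum>u\<in>C. real (wt G u)) = real (wt (contract G S) r) - real z - 1 + real (card C)"
    using of_nat_wt_contract[OF w SE, of r, where 'a = real] unfolding C_def z_def by simp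
  finally show ?thesis
    by simp
qed

lemma stable_graph_contract:
  assumes st: "stable_graph g n a G" and SE: "S \<subseteq> edges G"
  shows "stable_graph g n a (contract G S)"
proof -
  have w: "wf_graph G"
    using stable_graph_wf_legged[OF st] unfolding wf_legged_def by blast
  have genus: "int (card (edges G)) - int (card (verts G)) + 1 + (\<Sum>v\<in>verts G. int (wt G v)) = int g"
    and conn: "\<forall>u\<in>verts G. \<forall>v\<in>verts G. (u, v) \<in> (adj G (edges G))\<^sup>*"
    using st unfolding stable_graph_def by auto
  have "{e\<in>S. fst (endp G e) \<in> verts G} = S"
    using SE endp_in_verts[OF w] by auto
  then have "(\<Sum>r\<in>verts (contract G S). int (wt (contract G S) r)) = (\<Sum>u\<in>verts G. int (wt G u))
      + int (card S) + int (card (verts (contract G S))) - int (card (verts G))"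
    using sum_wt_contract[OF w SE order_refl] vclass_subset by simp
  moreover have "finite (edges G)"
    using w unfolding wf_graph_def by blast
  then have "card (edges (contract G S)) = card (edges G) - card S" "card S \<le> card (edges G)"
    using card_Diff_subset[OF finite_subset[OF SE] SE] card_mono[OF _ SE] by auto
  ultimately have "int (card (edges (contract G S))) - int (card (verts (contract G S))) + 1
      + (\<Sum>r\<in>verts (contract G S). int (wt (contract G S) r)) = int g"
    using genus by (simp add: of_nat_diff)
  moreover have "(u, v) \<in> (adj (contract G S) (edges (contract G S)))\<^sup>*"
    if "u \<in> verts (contract G S)" "v \<in> verts (contract G S)" for u v
    using that conn rtrancl_adj_contract[OF w order_refl] by auto
  moreover have "wf_legged n (contract G S)"
    using wf_legged_contract stable_graph_wf_legged[OF st] .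
  ultimately show ?thesis
    using st stable_vertex_contract[OF st SE]
    unfolding stable_graph_def wf_legged_def wf_graph_def by auto
qed

lemma vclass_mono:
  assumes "Z \<subseteq> Y" and "u \<in> vclass G Y x"
  shows "vclass G Z u \<subseteq> vclass G Y x"
  using assms adj_rtrancl_mono[OF assms(1)] unfolding vclass_def by (blast intro: rtrancl_trans)

lemma vrep_in_image_iff:
  assumes w: "wf_graph G" and K: "K \<subseteq> verts G" and closed: "\<forall>k\<in>K. vclass G Z k \<subseteq> K"
    and u: "u \<in> verts G"
  shows "vrep G Z u \<in> vrep G Z ` K \<longleftrightarrow> u \<in> K"
proof
  assume "vrep G Z u \<in> vrep G Z ` K"
  then obtain k where "k \<in> K" "vrep G Z u = vrep G Z k"
    by blast
  then show "u \<in> K"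
    using vrep_eq_iff_vclass[OF w u, of k Z] K closed by blast
qed blast

lemma vclass_contract_vrep:
  assumes w: "wf_graph G" and ZY: "Z \<subseteq> Y" and YE: "Y \<subseteq> edges G" and x: "x \<in> verts G"
  shows "vclass (contract G Z) (Y - Z) (vrep G Z x) = vrep G Z ` vclass G Y x"
proof
  show "vclass (contract G Z) (Y - Z) (vrep G Z x) \<subseteq> vrep G Z ` vclass G Y x"
  proof
    fix s assume s: "s \<in> vclass (contract G Z) (Y - Z) (vrep G Z x)"
    then obtain u where u: "u \<in> verts G" "s = vrep G Z u"
      using vclass_subset by fastforce
    then have "(x, u) \<in> (adj G Y)\<^sup>*"
      using s rtrancl_adj_contract_iff[OF w ZY YE x u(1)] vclass_iff by blast
    then show "s \<in> vrep G Z ` vclass G Y x"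
      using u vclass_iff by blast
  qed
  show "vrep G Z ` vclass G Y x \<subseteq> vclass (contract G Z) (Y - Z) (vrep G Z x)"
    using rtrancl_adj_contract_iff[OF w ZY YE x] vclass_iff by fastforce
qed

lemma vrep_contract_vrep_eq_iff:
  assumes w: "wf_graph G" and ZY: "Z \<subseteq> Y" and YE: "Y \<subseteq> edges G"
    and x: "x \<in> verts G" and y: "y \<in> verts G"
  shows "vrep (contract G Z) (Y - Z) (vrep G Z x) = vrep (contract G Z) (Y - Z) (vrep G Z y)
           \<longleftrightarrow> vrep G Y x = vrep G Y y"
  using vrep_eq_iff[OF wf_graph_contract[OF w], where u = "vrep G Z x" and v = "vrep G Z y"]
    rtrancl_adj_contract_iff[OF w ZY YE x y] vrep_eq_iff[OF w x y] x y by auto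

lemma wt_contract_contract:
  assumes w: "wf_graph G" and ZY: "Z \<subseteq> Y" and YE: "Y \<subseteq> edges G" and x: "x \<in> verts G"
  shows "wt (contract (contract G Z) (Y - Z)) (vrep (contract G Z) (Y - Z) (vrep G Z x))
           = wt (contract G Y) (vrep G Y x)"
proof -
  define G' where "G' = contract G Z"
  define K where "K = vclass G Y x"
  have w': "wf_graph G'" and Y'E: "Y - Z \<subseteq> edges G'"
    unfolding G'_def using wf_graph_contract[OF w] YE by auto
  have ZE: "Z \<subseteq> edges G"
    using ZY YE by blast
  have K: "K \<subseteq> verts G" and closed: "\<forall>u\<in>K. vclass G Z u \<subseteq> K"
    unfolding K_def using vclass_subset vclass_mono[OF ZY] by auto
  have K': "vclass G' (Y - Z) (vrep G' (Y - Z) (vrep G Z x)) = vrep G Z ` K"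
    using vclass_vrep[OF w'] vclass_contract_vrep[OF w ZY YE x] x unfolding G'_def K_def by simp
  have "{e\<in>Y - Z. fst (endp G' e) \<in> vrep G Z ` K} = {e\<in>Y - Z. fst (endp G e) \<in> K}"
    using vrep_in_image_iff[OF w K closed] endp_in_verts[OF w] YE unfolding G'_def by auto
  moreover have "finite Y"
    using w finite_subset[OF YE] unfolding wf_graph_def by blast
  then have "card {e\<in>Y. fst (endp G e) \<in> K}
      = card {e\<in>Y - Z. fst (endp G e) \<in> K} + card {e\<in>Z. fst (endp G e) \<in> K}"
    by (rule card_filter_split[OF _ ZY])
  moreover have "vclass G Y (vrep G Y x) = K"
    unfolding K_def using vclass_vrep[OF w x] .
  ultimately have "int (wt (contract G' (Y - Z)) (vrep G' (Y - Z) (vrep G Z x)))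
      = int (wt (contract G Y) (vrep G Y x))"
    using of_nat_wt_contract[OF w' Y'E, where 'a = int] of_nat_wt_contract[OF w YE, where 'a = int]
      sum_wt_contract[OF w ZE K closed] K'
    unfolding G'_def by simp
  then show ?thesis
    unfolding G'_def by simp
qed

lemma curve_iso_contract_contract:
  assumes wf: "wf_legged n G" and ZY: "Z \<subseteq> Y" and YE: "Y \<subseteq> edges G"
  shows "curve_iso n (contract G Y, l) (contract (contract G Z) (Y - Z), l)"
proof -
  have w: "wf_graph G"
    using wf unfolding wf_legged_def by blast
  define f where "f r = vrep (contract G Z) (Y - Z) (vrep G Z r)" for r
  have f_vrep: "f (vrep G Y x) = vrep (contract G Z) (Y - Z) (vrep G Z x)" if "x \<in> verts G" for x
    using vrep_contract_vrep_eq_iff[OF w ZY YE vrep_in_verts[OF w that] that]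
      vrep_eq_iff[OF w vrep_in_verts[OF w that] that] rtrancl_vrep[OF w that] adj_rtrancl_sym
    unfolding f_def by blast
  have "inj_on f (verts (contract G Y))"
    using f_vrep vrep_contract_vrep_eq_iff[OF w ZY YE] by (auto intro!: inj_onI)
  moreover have "f ` verts (contract G Y) = verts (contract (contract G Z) (Y - Z))"
    using f_vrep by (force simp: image_comp)
  moreover have "edges (contract G Y) = edges (contract (contract G Z) (Y - Z))"
    using ZY by auto
  moreover have "endp (contract (contract G Z) (Y - Z)) e = map_prod f f (endp (contract G Y) e)"
    if "e \<in> edges G" for e
    using f_vrep endp_in_verts[OF w that] by (cases "endp G e") simp
  ultimately have "graph_iso n f id (contract G Y) (contract (contract G Z) (Y - Z))"
    using f_vrep wt_contract_contract[OF w ZY YE] wf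
    unfolding graph_iso_def bij_betw_def wf_legged_def by auto
  then show ?thesis
    unfolding curve_iso_iff by (metis id_apply)
qed

section \<open>The colimit topology\<close>

lemma cone_map_in_moduli_points:
  assumes st: "stable_graph g n a G" and l: "l \<in> cone_set fin (edges G)"
  shows "cone_map n G l \<in> moduli_points fin g n a"
proof -
  define Z where "Z = {e\<in>edges G. l e = 0}"
  have "stable_graph g n a (contract G Z)"
    unfolding Z_def by (rule stable_graph_contract[OF st]) auto
  then have "stable_curve fin g n a (contract G Z, l)"
    using l unfolding stable_curve_def cone_set_def Z_def by (auto simp: order_le_less)
  then show ?thesis
    unfolding moduli_points_def cone_map_def Z_def by blast
qed

lemma topspace_cone_top [simp]: "topspace (cone_top fin E) = cone_set fin E"
  unfolding cone_top_def by simp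

lemma openin_moduli_top:
  "openin (moduli_top fin g n a) U \<longleftrightarrow>
     final_open (moduli_points fin g n a) (\<lambda>G. cone_top fin (edges G)) (cone_map n) {G. stable_graph g n a G} U"
  unfolding moduli_top_def final_topology_def by (simp only: topology_inverse'[OF istopology_final_open])

lemma topspace_moduli_top: "topspace (moduli_top fin g n a) = moduli_points fin g n a"
proof
  show "topspace (moduli_top fin g n a) \<subseteq> moduli_points fin g n a"
    using openin_moduli_top[of fin g n a "topspace (moduli_top fin g n a)"] unfolding final_open_def by simp
  have "openin (moduli_top fin g n a) (moduli_points fin g n a)"
    unfolding openin_moduli_top final_open_def
  proof (intro conjI ballI order_refl)
    fix G assume "G \<in> {G. stable_graph g n a G}"
    then have "{l \<in> topspace (cone_top fin (edges G)). cone_map n G l \<in> moduli_points fin g n a}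
        = topspace (cone_top fin (edges G))"
      using cone_map_in_moduli_points by auto
    then show "openin (cone_top fin (edges G))
        {l \<in> topspace (cone_top fin (edges G)). cone_map n G l \<in> moduli_points fin g n a}"
      using openin_topspace[of "cone_top fin (edges G)"] by simp
  qed
  then show "moduli_points fin g n a \<subseteq> topspace (moduli_top fin g n a)"
    by (rule openin_subset)
qed

lemma closedin_moduli_top:
  "closedin (moduli_top fin g n a) C \<longleftrightarrow> C \<subseteq> moduli_points fin g n a \<and>
     (\<forall>G. stable_graph g n a G \<longrightarrow> closedin (cone_top fin (edges G)) {l\<in>cone_set fin (edges G). cone_map n G l \<in> C})"
proof -
  have "{l \<in> cone_set fin (edges G). cone_map n G l \<in> moduli_points fin g n a - C}
      = cone_set fin (edges G) - {l\<in>cone_set fin (edges G). cone_map n G l \<in> C}" if "stable_graph g n a G" for G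
    using cone_map_in_moduli_points[OF that] by auto
  then show ?thesis
    unfolding closedin_def[of "moduli_top fin g n a"] topspace_moduli_top openin_moduli_top final_open_def
    by (auto simp: closedin_def)
qed

lemma contract_legv_update: "contract (G\<lparr>legv := x\<rparr>) S = (contract G S)\<lparr>legv := vrep G S \<circ> x\<rparr>"
  unfolding contract_def vrep_def vclass_def by (simp add: o_def)

lemma cone_map_relabel:
  assumes wf: "wf_legged n G" and \<rho>: "\<rho> ` {1..n} \<subseteq> {1..n}"
  shows "relabel_map n \<rho> (cone_map n G l) = cone_map n (G\<lparr>legv := legv G \<circ> \<rho>\<rparr>) l"
proof -
  define Z where "Z = {e\<in>edges G. l e = 0}"
  have "relabel_map n \<rho> (cone_map n G l) = iso_class n (relabel \<rho> (contract G Z, l))"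
    unfolding cone_map_def Z_def[symmetric] using relabel_map_iso_class[OF _ \<rho>] wf_legged_contract[OF wf]
    by simp
  also have "\<dots> = cone_map n (G\<lparr>legv := legv G \<circ> \<rho>\<rparr>) l"
    unfolding cone_map_def relabel_pair contract_legv_update Z_def by (simp add: o_def)
  finally show ?thesis .
qed

lemma cone_map_contract:
  assumes wf: "wf_legged n G" and Z: "Z \<subseteq> edges G" and l: "l \<in> cone_set fin (edges G - Z)"
  shows "cone_map n (contract G Z) l = cone_map n G l"
proof -
  define Y where "Y = {e\<in>edges G. l e = 0}"
  have ZY: "Z \<subseteq> Y"
    using l Z unfolding Y_def cone_set_def by auto
  have "{e\<in>edges (contract G Z). l e = 0} = Y - Z"
    unfolding Y_def by auto
  then have "cone_map n (contract G Z) l = iso_class n (contract (contract G Z) (Y - Z), l)"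
    unfolding cone_map_def by simp
  also have "\<dots> = iso_class n (contract G Y, l)"
    using iso_class_eq[OF curve_iso_contract_contract[OF wf ZY, of l]] wf_legged_contract[OF wf]
    unfolding Y_def by auto
  finally show ?thesis
    unfolding cone_map_def Y_def .
qed

lemma cone_top_face:
  assumes "Z \<subseteq> E"
  shows "cone_top fin (E - Z) = subtopology (cone_top fin E) (cone_set fin (E - Z))"
proof -
  have "cone_set fin E \<inter> cone_set fin (E - Z) = cone_set fin (E - Z)"
    using assms unfolding cone_set_def by auto
  then show ?thesis
    unfolding cone_top_def subtopology_subtopology by simp
qed

lemma closedin_cone_face:
  assumes "Z \<subseteq> E"
  shows "closedin (cone_top fin E) (cone_set fin (E - Z))"
proof -
  let ?P = "product_topology (\<lambda>_. euclidean) UNIV :: (nat \<Rightarrow> ereal) topology"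
  have "closedin ?P {l \<in> topspace ?P. l e \<in> {0}}" for e
    by (rule closedin_continuous_map_preimage[OF continuous_map_product_projection]) auto
  then have "closedin ?P {l. l e = 0}" for e
    by simp
  then have "closedin ?P {l. \<forall>e\<in>Z. l e = 0}"
    using closedin_Inter[of "(\<lambda>e. {l. l e = 0}) ` Z"] closedin_topspace[of ?P]
    by (cases "Z = {}") (auto simp: Inter_eq)
  moreover have "cone_set fin (E - Z) = cone_set fin E \<inter> {l. \<forall>e\<in>Z. l e = 0}"
    using assms unfolding cone_set_def by auto
  ultimately show ?thesis
    unfolding cone_top_def using closedin_subtopology_Int_closed by simp
qed

text \<open>G need not be (g,a)-stable: its cone meets the moduli space only in the faces of its
  (g,a)-stable contractions.\<close>
lemma cone_preimage_eq_Union_faces: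
  assumes wf: "wf_legged n G" and C: "C \<subseteq> moduli_points fin g n a"
  shows "{l\<in>cone_set fin (edges G). cone_map n G l \<in> C} =
     (\<Union>Z\<in>{Z. Z \<subseteq> edges G \<and> stable_graph g n a (contract G Z)}.
        {l\<in>cone_set fin (edges G - Z). cone_map n (contract G Z) l \<in> C})"
    (is "?lhs = ?rhs")
proof
  show "?lhs \<subseteq> ?rhs"
  proof
    fix l assume l: "l \<in> ?lhs"
    define Y where "Y = {e\<in>edges G. l e = 0}"
    have YE: "Y \<subseteq> edges G" and lY: "l \<in> cone_set fin (edges G - Y)"
      using l unfolding cone_set_def Y_def by auto
    obtain D where D: "stable_curve fin g n a D" "iso_class n (contract G Y, l) = iso_class n D"
      using l C unfolding moduli_points_def cone_map_def Y_def by auto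
    then have "curve_iso n D (contract G Y, l)"
      using curve_iso_sym[OF curve_iso_if_iso_class_eq[OF D(2)]] wf_legged_contract[OF wf] by simp
    moreover have "stable_graph g n a (fst D)"
      using D(1) unfolding stable_curve_def by blast
    ultimately have "stable_graph g n a (contract G Y)"
      using stable_graph_if_curve_iso by fastforce
    moreover have "cone_map n (contract G Y) l \<in> C"
      using cone_map_contract[OF wf YE lY] l by simp
    ultimately show "l \<in> ?rhs"
      using YE lY by blast
  qed
  show "?rhs \<subseteq> ?lhs"
  proof
    fix l assume "l \<in> ?rhs"
    then obtain Z where Z: "Z \<subseteq> edges G" and l: "l \<in> cone_set fin (edges G - Z)"
      and lC: "cone_map n (contract G Z) l \<in> C"
      by blast
    have "l \<in> cone_set fin (edges G)"
      using l unfolding cone_set_def by auto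
    then show "l \<in> ?lhs"
      using lC cone_map_contract[OF wf Z l] by simp
  qed
qed

lemma closedin_cone_preimage:
  assumes wf: "wf_legged n G" and C: "closedin (moduli_top fin g n a) C"
  shows "closedin (cone_top fin (edges G)) {l\<in>cone_set fin (edges G). cone_map n G l \<in> C}"
proof -
  have "finite (edges G)"
    using wf unfolding wf_legged_def wf_graph_def by blast
  then have "finite {Z. Z \<subseteq> edges G \<and> stable_graph g n a (contract G Z)}"
    by (rule finite_subset[rotated, OF finite_Pow_iff[THEN iffD2]]) auto
  moreover have "closedin (cone_top fin (edges G))
      {l\<in>cone_set fin (edges G - Z). cone_map n (contract G Z) l \<in> C}"
    if "Z \<subseteq> edges G" "stable_graph g n a (contract G Z)" for Z
  proof -
    have "closedin (cone_top fin (edges (contract G Z)))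
        {l\<in>cone_set fin (edges (contract G Z)). cone_map n (contract G Z) l \<in> C}"
      using C that(2) unfolding closedin_moduli_top by blast
    then have "closedin (cone_top fin (edges G - Z))
        {l\<in>cone_set fin (edges G - Z). cone_map n (contract G Z) l \<in> C}"
      by simp
    then show ?thesis
      using cone_top_face[OF that(1)] closedin_cone_face[OF that(1)] closedin_trans_full by metis
  qed
  ultimately show ?thesis
    using cone_preimage_eq_Union_faces[OF wf] C unfolding closedin_moduli_top
    by (auto intro!: closedin_Union)
qed

section \<open>The relabelling embedding\<close>

lemma relabel_map_in_moduli_points:
  assumes wa: "weight_datum g n a" and wb: "weight_datum g n b"
    and \<sigma>: "\<sigma> permutes {1..n}" and \<tau>: "\<tau> permutes {1..n}"
    and ch: "chamber_le g n (a \<circ> \<sigma>) (b \<circ> \<tau>)" and c: "c \<in> moduli_points fin g n a"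
  shows "relabel_map n (\<sigma> \<circ> inv \<tau>) c \<in> moduli_points fin g n b"
proof -
  have \<rho>: "(\<sigma> \<circ> inv \<tau>) ` {1..n} \<subseteq> {1..n}"
    using permutes_image[OF permutes_compose[OF permutes_inv[OF \<tau>] \<sigma>]] by simp
  obtain G l where C: "stable_curve fin g n a (G, l)" "c = iso_class n (G, l)"
    using c unfolding moduli_points_def by auto
  then have st: "stable_graph g n a G"
    unfolding stable_curve_def by simp
  have "relabel_map n (\<sigma> \<circ> inv \<tau>) c = iso_class n (G\<lparr>legv := legv G \<circ> (\<sigma> \<circ> inv \<tau>)\<rparr>, l)"
    using relabel_map_iso_class[OF _ \<rho>, of "(G, l)"] stable_graph_wf_legged[OF st] C(2)
    by (simp add: relabel_pair)
  moreover have "stable_curve fin g n b (G\<lparr>legv := legv G \<circ> (\<sigma> \<circ> inv \<tau>)\<rparr>, l)"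
    using C(1) stable_graph_relabel[OF wa wb \<sigma> \<tau> ch st] unfolding stable_curve_def by simp
  ultimately show ?thesis
    unfolding moduli_points_def by blast
qed

lemma relabel_map_iso_class_eq_iff:
  assumes \<rho>: "\<rho> permutes {1..n}" and wf: "wf_legged n (fst C)" "wf_legged n (fst D)"
  shows "relabel_map n \<rho> (iso_class n C) = relabel_map n \<rho> (iso_class n D) \<longleftrightarrow> iso_class n C = iso_class n D"
proof -
  have "\<rho> ` {1..n} \<subseteq> {1..n}"
    using permutes_image[OF \<rho>] by simp
  then have "relabel_map n \<rho> (iso_class n C) = iso_class n (relabel \<rho> C)"
    "relabel_map n \<rho> (iso_class n D) = iso_class n (relabel \<rho> D)"
    using relabel_map_iso_class wf by simp_all
  then show ?thesis
    using iso_class_relabel_inj[OF \<rho> wf(1)] by metis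
qed

lemma relabel_map_mem_image_iff:
  assumes \<rho>: "\<rho> permutes {1..n}" and C: "C \<subseteq> moduli_points fin g n a" and wf: "wf_legged n (fst X)"
  shows "relabel_map n \<rho> (iso_class n X) \<in> relabel_map n \<rho> ` C \<longleftrightarrow> iso_class n X \<in> C"
proof
  assume "relabel_map n \<rho> (iso_class n X) \<in> relabel_map n \<rho> ` C"
  then obtain D where D: "iso_class n D \<in> C" "stable_curve fin g n a D"
    and eq: "relabel_map n \<rho> (iso_class n X) = relabel_map n \<rho> (iso_class n D)"
    using C unfolding moduli_points_def by blast
  have "wf_legged n (fst D)"
    using D(2) stable_graph_wf_legged unfolding stable_curve_def by blast
  then show "iso_class n X \<in> C"
    using eq relabel_map_iso_class_eq_iff[OF \<rho> wf] D(1) by simp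
qed blast

lemma inj_on_relabel_map:
  assumes \<rho>: "\<rho> permutes {1..n}"
  shows "inj_on (relabel_map n \<rho>) (moduli_points fin g n a)"
proof (rule inj_onI)
  fix c d assume "c \<in> moduli_points fin g n a" "d \<in> moduli_points fin g n a"
    and eq: "relabel_map n \<rho> c = relabel_map n \<rho> d"
  then obtain C D where "stable_curve fin g n a C" "c = iso_class n C"
    and "stable_curve fin g n a D" "d = iso_class n D"
    unfolding moduli_points_def by blast
  then show "c = d"
    using eq relabel_map_iso_class_eq_iff[OF \<rho>] stable_graph_wf_legged
    unfolding stable_curve_def by blast
qed

lemma continuous_map_relabel_map:
  assumes wa: "weight_datum g n a" and wb: "weight_datum g n b"
    and \<sigma>: "\<sigma> permutes {1..n}" and \<tau>: "\<tau> permutes {1..n}"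
    and ch: "chamber_le g n (a \<circ> \<sigma>) (b \<circ> \<tau>)"
  shows "continuous_map (moduli_top fin g n a) (moduli_top fin g n b) (relabel_map n (\<sigma> \<circ> inv \<tau>))"
  unfolding continuous_map_def
proof (intro conjI allI impI)
  define \<rho> where "\<rho> = \<sigma> \<circ> inv \<tau>"
  have \<rho>: "\<rho> ` {1..n} \<subseteq> {1..n}"
    using permutes_image[OF permutes_compose[OF permutes_inv[OF \<tau>] \<sigma>]] unfolding \<rho>_def by simp
  show "relabel_map n (\<sigma> \<circ> inv \<tau>) \<in> topspace (moduli_top fin g n a) \<rightarrow> topspace (moduli_top fin g n b)"
    using relabel_map_in_moduli_points[OF wa wb \<sigma> \<tau> ch] unfolding topspace_moduli_top by blast
  fix U assume U: "openin (moduli_top fin g n b) U"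
  show "openin (moduli_top fin g n a) {x \<in> topspace (moduli_top fin g n a). relabel_map n (\<sigma> \<circ> inv \<tau>) x \<in> U}"
    unfolding openin_moduli_top final_open_def topspace_moduli_top \<rho>_def[symmetric]
  proof (intro conjI ballI)
    fix G assume "G \<in> {G. stable_graph g n a G}"
    then have st: "stable_graph g n a G"
      by simp
    have "{l \<in> topspace (cone_top fin (edges G)). cone_map n G l \<in> {x \<in> moduli_points fin g n a. relabel_map n \<rho> x \<in> U}}
        = {l \<in> cone_set fin (edges (G\<lparr>legv := legv G \<circ> \<rho>\<rparr>)). cone_map n (G\<lparr>legv := legv G \<circ> \<rho>\<rparr>) l \<in> U}"
      using cone_map_in_moduli_points[OF st] cone_map_relabel[OF stable_graph_wf_legged[OF st] \<rho>] by auto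
    moreover have "stable_graph g n b (G\<lparr>legv := legv G \<circ> \<rho>\<rparr>)"
      unfolding \<rho>_def using stable_graph_relabel[OF wa wb \<sigma> \<tau> ch st] .
    then have "openin (cone_top fin (edges (G\<lparr>legv := legv G \<circ> \<rho>\<rparr>)))
        {l \<in> topspace (cone_top fin (edges (G\<lparr>legv := legv G \<circ> \<rho>\<rparr>))). cone_map n (G\<lparr>legv := legv G \<circ> \<rho>\<rparr>) l \<in> U}"
      using U unfolding openin_moduli_top final_open_def by blast
    ultimately show "openin (cone_top fin (edges G))
        {l \<in> topspace (cone_top fin (edges G)). cone_map n G l \<in> {x \<in> moduli_points fin g n a. relabel_map n \<rho> x \<in> U}}"
      by simp
  qed blast
qed

text \<open>The cone of a (g,b)-stable graph H is that of H with its legs relabelled back, which need not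
  be (g,a)-stable.\<close>
lemma closed_map_relabel_map:
  assumes \<rho>: "\<rho> permutes {1..n}"
    and maps_to: "relabel_map n \<rho> ` moduli_points fin g n a \<subseteq> moduli_points fin g n b"
  shows "closed_map (moduli_top fin g n a) (moduli_top fin g n b) (relabel_map n \<rho>)"
  unfolding closed_map_def
proof (intro allI impI)
  fix C assume C: "closedin (moduli_top fin g n a) C"
  then have CP: "C \<subseteq> moduli_points fin g n a"
    unfolding closedin_moduli_top by blast
  have \<rho>_maps: "\<rho> ` {1..n} \<subseteq> {1..n}" "inv \<rho> ` {1..n} \<subseteq> {1..n}"
    using permutes_image[OF \<rho>] permutes_image[OF permutes_inv[OF \<rho>]] by simp_all
  have "closedin (cone_top fin (edges H)) {l \<in> cone_set fin (edges H). cone_map n H l \<in> relabel_map n \<rho> ` C}"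
    if stH: "stable_graph g n b H" for H
  proof -
    define H' where "H' = H\<lparr>legv := legv H \<circ> inv \<rho>\<rparr>"
    have wf: "wf_legged n H'"
      unfolding H'_def using wf_legged_relabel[OF stable_graph_wf_legged[OF stH] \<rho>_maps(2)] .
    have "H'\<lparr>legv := legv H' \<circ> \<rho>\<rparr> = H"
      unfolding H'_def using permutes_inv_o(2)[OF \<rho>] by (simp add: o_assoc[symmetric])
    then have "cone_map n H l = relabel_map n \<rho> (cone_map n H' l)" for l
      using cone_map_relabel[OF wf \<rho>_maps(1)] by simp
    then have "{l \<in> cone_set fin (edges H). cone_map n H l \<in> relabel_map n \<rho> ` C}
        = {l \<in> cone_set fin (edges H'). cone_map n H' l \<in> C}"
      using relabel_map_mem_image_iff[OF \<rho> CP] wf_legged_contract[OF wf]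
      unfolding cone_map_def H'_def by auto
    then show ?thesis
      using closedin_cone_preimage[OF wf C] unfolding H'_def by simp
  qed
  then show "closedin (moduli_top fin g n b) (relabel_map n \<rho> ` C)"
    using CP maps_to unfolding closedin_moduli_top by blast
qed

lemma embedding_map_relabel_map:
  assumes wa: "weight_datum g n a" and wb: "weight_datum g n b"
    and \<sigma>: "\<sigma> permutes {1..n}" and \<tau>: "\<tau> permutes {1..n}"
    and ch: "chamber_le g n (a \<circ> \<sigma>) (b \<circ> \<tau>)"
  shows "embedding_map (moduli_top fin g n a) (moduli_top fin g n b) (relabel_map n (\<sigma> \<circ> inv \<tau>))"
proof (rule injective_closed_imp_embedding_map)
  have \<rho>: "(\<sigma> \<circ> inv \<tau>) permutes {1..n}"
    using permutes_compose[OF permutes_inv[OF \<tau>] \<sigma>] .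
  show "continuous_map (moduli_top fin g n a) (moduli_top fin g n b) (relabel_map n (\<sigma> \<circ> inv \<tau>))"
    using continuous_map_relabel_map[OF wa wb \<sigma> \<tau> ch] .
  show "closed_map (moduli_top fin g n a) (moduli_top fin g n b) (relabel_map n (\<sigma> \<circ> inv \<tau>))"
    using closed_map_relabel_map[OF \<rho>] relabel_map_in_moduli_points[OF wa wb \<sigma> \<tau> ch] by blast
  show "inj_on (relabel_map n (\<sigma> \<circ> inv \<tau>)) (topspace (moduli_top fin g n a))"
    unfolding topspace_moduli_top using inj_on_relabel_map[OF \<rho>] .
qed

lemma embedding_map_subtopology:
  assumes "embedding_map X Y f" and "f ` (topspace X \<inter> S) \<subseteq> T"
  shows "embedding_map (subtopology X S) (subtopology Y T) f"
proof -
  have "embedding_map (subtopology X S) X id"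
    unfolding embedding_map_def by (simp add: subtopology_restrict)
  then have "embedding_map (subtopology X S) Y f"
    using embedding_map_compose[OF _ assms(1)] by fastforce
  then show ?thesis
    using assms(2) by (simp add: embedding_map_in_subtopology)
qed

lemma relabel_map_volume_one:
  assumes wa: "weight_datum g n a" and wb: "weight_datum g n b"
    and \<sigma>: "\<sigma> permutes {1..n}" and \<tau>: "\<tau> permutes {1..n}"
    and ch: "chamber_le g n (a \<circ> \<sigma>) (b \<circ> \<tau>)"
    and c: "c \<in> moduli_points True g n a" and C: "C \<in> c" and len: "total_length C = 1"
  shows "\<exists>D\<in>relabel_map n (\<sigma> \<circ> inv \<tau>) c. total_length D = 1"
proof -
  have \<rho>: "(\<sigma> \<circ> inv \<tau>) ` {1..n} \<subseteq> {1..n}"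
    using permutes_image[OF permutes_compose[OF permutes_inv[OF \<tau>] \<sigma>]] by simp
  obtain G l where G: "stable_curve True g n a (G, l)" "c = iso_class n (G, l)"
    using c unfolding moduli_points_def by auto
  then have st: "stable_graph g n a G"
    unfolding stable_curve_def by simp
  have iso: "curve_iso n (G, l) C"
    using C G(2) unfolding iso_class_def by simp
  then have "wf_legged n (fst C)"
    using stable_graph_if_curve_iso[OF iso] st stable_graph_wf_legged by fastforce
  moreover have "c = iso_class n C"
    using iso_class_eq[OF iso] stable_graph_wf_legged[OF st] G(2) by simp
  ultimately have "relabel (\<sigma> \<circ> inv \<tau>) C \<in> relabel_map n (\<sigma> \<circ> inv \<tau>) c"
    using relabel_map_iso_class[OF _ \<rho>] iso_class_self by simp
  moreover have "total_length (relabel (\<sigma> \<circ> inv \<tau>) C) = 1"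
    using len unfolding total_length_def relabel_def by simp
  ultimately show ?thesis
    by blast
qed

theorem mainTheorem1:
  fixes g n N :: nat and As :: "nat \<Rightarrow> nat \<Rightarrow> real"
  assumes "n \<ge> 1" and "N \<ge> 1"
    and "\<forall>p\<in>{1..N}. weight_datum g n (As p) \<and> in_chamber g n (As p)"
    and "\<forall>p\<in>{1..<N}. sym_chamber_le g n (As p) (As (Suc p))"
  shows "\<forall>p\<in>{1..<N}. \<exists>\<rho>. \<rho> permutes {1..n} \<and>
           embedding_map (Mtrop g n (As p)) (Mtrop g n (As (Suc p))) (relabel_map n \<rho>) \<and>
           embedding_map (Mtrop_bar g n (As p)) (Mtrop_bar g n (As (Suc p))) (relabel_map n \<rho>) \<and>
           embedding_map (Delta_trop g n (As p)) (Delta_trop g n (As (Suc p))) (relabel_map n \<rho>)"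
proof
  fix p assume p: "p \<in> {1..<N}"
  have wa: "weight_datum g n (As p)" and wb: "weight_datum g n (As (Suc p))"
    using assms(3) p by auto
  obtain \<sigma> \<tau> where \<sigma>: "\<sigma> permutes {1..n}" and \<tau>: "\<tau> permutes {1..n}"
    and ch: "chamber_le g n (As p \<circ> \<sigma>) (As (Suc p) \<circ> \<tau>)"
    using assms(4) p unfolding sym_chamber_le_def by blast
  have embedding: "embedding_map (moduli_top fin g n (As p)) (moduli_top fin g n (As (Suc p)))
      (relabel_map n (\<sigma> \<circ> inv \<tau>))" for fin
    using embedding_map_relabel_map[OF wa wb \<sigma> \<tau> ch] .
  have "embedding_map (Delta_trop g n (As p)) (Delta_trop g n (As (Suc p))) (relabel_map n (\<sigma> \<circ> inv \<tau>))"
    unfolding Delta_trop_def Mtrop_def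
    using relabel_map_in_moduli_points[OF wa wb \<sigma> \<tau> ch] relabel_map_volume_one[OF wa wb \<sigma> \<tau> ch]
    by (intro embedding_map_subtopology[OF embedding]) blast
  then show "\<exists>\<rho>. \<rho> permutes {1..n} \<and>
           embedding_map (Mtrop g n (As p)) (Mtrop g n (As (Suc p))) (relabel_map n \<rho>) \<and>
           embedding_map (Mtrop_bar g n (As p)) (Mtrop_bar g n (As (Suc p))) (relabel_map n \<rho>) \<and>
           embedding_map (Delta_trop g n (As p)) (Delta_trop g n (As (Suc p))) (relabel_map n \<rho>)"
    using permutes_compose[OF permutes_inv[OF \<tau>] \<sigma>] embedding unfolding Mtrop_def Mtrop_bar_def by blast
qed

end
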